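(* Let $a<b$, let $h:[a,b]\to[0,\infty)$ be a concave function that is not identically zero, and let $\alpha,\beta>0$. Let $\mathrm{g}_\alpha(h)=\frac{\int_a^b t\,h(t)^\alpha\,dt}{\int_a^b h(t)^\alpha\,dt}$. If $\beta\leq\alpha$ then \[\frac{\int_{\mathrm{g}_\alpha(h)}^b h(t)^\beta\,dt}{\int_a^b h(t)^\beta\,dt}\geq\left(\frac{\beta+1}{\alpha+2}\right)^{\beta+1},\] whereas if $\alpha\leq\beta$ then \[\frac{\int_{\mathrm{g}_\alpha(h)}^b h(t)^\beta\,dt}{\int_a^b h(t)^\beta\,dt}\geq\left(\frac{\alpha+1}{\alpha+2}\right)^{\beta+1}.\] *)

theory Defs
  imports "HOL-Analysis.Analysis"
begin

definition g_alpha :: "real \<Rightarrow> real \<Rightarrow> real \<Rightarrow> (real \<Rightarrow> real) \<Rightarrow> real" where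
  "g_alpha \<alpha> a b h =
     integral {a..b} (\<lambda>t. t * h t powr \<alpha>) / integral {a..b} (\<lambda>t. h t powr \<alpha>)"

end

(*
  For x in (a,b) compare h with its cone at x: the linear function through (x, h x), vanishing at
  an apex, whose gamma-th power has the same mass on [x, apex] as h^gamma on [x, b].  Concavity
  forces the apex to lie beyond b, the cone to dominate h on [a, x], and the cone to cross h exactly
  once on [x, b].  Comparing h^gamma with the cone at the centroid gives the Grunbaum-type bound
  tail_mass gamma (centroid gamma) >= ((gamma+1)/(gamma+2))^(gamma+1) * mass gamma, the extremal
  profile being a truncated cone; comparing the cones for two exponents gives the Berwald-type
  monotonicity of (tail mass ratio)^(1/(gamma+1)) in gamma, which settles the case alpha <= beta.
  For beta <= alpha one moves from centroid beta to centroid alpha, using that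
  tail_mass beta x / (b - x)^(beta+1) increases in x and that (gamma+2) * (b - centroid gamma)
  increases in gamma; the latter follows from the cone comparisons for the reflected profile
  t |-> h (-t), which bound head masses and head moments.
*)

theory Submission
  imports Defs
begin

lemma integrable_on_Icc_if_bounded_continuous_on_Ioo:
  fixes f :: "real \<Rightarrow> real"
  assumes "continuous_on {a<..<b} f" "\<And>t. t \<in> {a<..<b} \<Longrightarrow> \<bar>f t\<bar> \<le> M"
  shows "f integrable_on {a..b}"
proof -
  have "f \<in> borel_measurable (lebesgue_on {a<..<b})"
    by (rule continuous_imp_measurable_on_sets_lebesgue[OF assms(1)]) auto
  moreover have "(\<lambda>_. M) integrable_on {a<..<b}"
    using integrable_const_ivl[of M a b] by (simp add: integrable_on_Icc_iff_Ioo)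
  ultimately have "f integrable_on {a<..<b}"
    by (rule measurable_bounded_by_integrable_imp_integrable_real) (use assms(2) in auto)
  thus ?thesis by (simp add: integrable_on_Icc_iff_Ioo)
qed

lemma has_real_derivative_integral_interior:
  fixes f :: "real \<Rightarrow> real"
  assumes "f integrable_on {a..b}" "continuous_on {a<..<b} f" "x \<in> {a<..<b}"
  shows "((\<lambda>y. integral {a..y} f) has_real_derivative f x) (at x)"
proof -
  have "continuous (at x) f"
    using assms(2,3) by (simp add: continuous_on_eq_continuous_at)
  hence "continuous (at x within {a..b} - {}) f"
    by (rule continuous_at_imp_continuous_within)
  from integral_has_vector_derivative_continuous_at[OF assms(1) _ _ this]
  have "((\<lambda>u. integral {a..u} f) has_vector_derivative f x) (at x within {a..b})"
    using assms(3) by auto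
  moreover have "at x within {a..b} = at x"
    using assms(3) by (intro at_within_interior) auto
  ultimately show ?thesis by (simp add: has_real_derivative_iff_has_vector_derivative)
qed

lemma integral_pos_if_ge_on_subinterval:
  fixes f :: "real \<Rightarrow> real"
  assumes "f integrable_on {u..v}" "\<And>t. t \<in> {u..v} \<Longrightarrow> f t \<ge> 0"
    and "u \<le> u'" "u' < v'" "v' \<le> v" "\<And>t. t \<in> {u'..v'} \<Longrightarrow> f t \<ge> e" "e > 0"
  shows "integral {u..v} f > 0"
proof -
  have f': "f integrable_on {u'..v'}"
    by (rule integrable_on_subinterval[OF assms(1)]) (use assms in auto)
  have "0 < integral {u'..v'} (\<lambda>_. e)" using assms by simp
  also have "\<dots> \<le> integral {u'..v'} f"
    by (rule integral_le[OF _ f']) (use assms in auto)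
  also have "\<dots> \<le> integral {u..v} f"
    by (rule integral_subset_le[OF _ f' assms(1)]) (use assms in auto)
  finally show ?thesis .
qed

definition cone_primitive :: "real \<Rightarrow> real \<Rightarrow> real \<Rightarrow> real \<Rightarrow> real" where
  "cone_primitive A B \<gamma> s = A * s powr (\<gamma>+1) / (\<gamma>+1) + B * s powr (\<gamma>+2) / (\<gamma>+2)"

lemma cone_primitive_0 [simp]: "cone_primitive A B \<gamma> 0 = 0"
  by (simp add: cone_primitive_def)

lemma cone_primitive_eq:
  assumes "s \<ge> 0"
  shows "cone_primitive A B e s = s powr (e + 1) * (A / (e + 1) + B * s / (e + 2))"
proof (cases "s = 0")
  case False
  hence "s powr (e + 2) = s powr (e + 1) * s"
    using powr_add[of s "e + 1" 1] assms by (simp add: add_ac)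
  thus ?thesis by (simp add: cone_primitive_def algebra_simps)
qed (simp add: cone_primitive_def)

lemma has_integral_affine_times_powr:
  assumes "u \<le> v" "v \<le> p" "\<gamma> > 0"
  shows "((\<lambda>t. (A + B * (p - t)) * (p - t) powr \<gamma>) has_integral
           cone_primitive A B \<gamma> (p - u) - cone_primitive A B \<gamma> (p - v)) {u..v}"
proof -
  define F where "F t = - cone_primitive A B \<gamma> (p - t)" for t
  have "((\<lambda>t. (A + B * (p - t)) * (p - t) powr \<gamma>) has_integral (F v - F u)) {u..v}"
  proof (rule fundamental_theorem_of_calculus_interior[OF assms(1)])
    show "continuous_on {u..v} F"
      unfolding F_def cone_primitive_def
      by (intro continuous_intros continuous_on_powr') (use assms in auto)
    fix t assume t: "t \<in> {u<..<v}"
    hence pt: "p - t > 0" using assms by auto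
    have d1: "((\<lambda>t. (p - t) powr (\<gamma>+1)) has_real_derivative (\<gamma>+1) * (p - t) powr \<gamma> * (-1)) (at t)"
      using DERIV_fun_powr[of "\<lambda>t. p - t" "-1" t "\<gamma>+1"] pt by (auto intro!: derivative_eq_intros)
    have d2: "((\<lambda>t. (p - t) powr (\<gamma>+2)) has_real_derivative (\<gamma>+2) * ((p - t) * (p - t) powr \<gamma>) * (-1)) (at t)"
    proof -
      have "(p - t) powr (\<gamma> + 2 - 1) = (p - t) * (p - t) powr \<gamma>"
        using pt by (simp add: powr_add add.commute)
      thus ?thesis
        using DERIV_fun_powr[of "\<lambda>t. p - t" "-1" t "\<gamma>+2"] pt by (auto intro!: derivative_eq_intros)
    qed
    have "(F has_real_derivative - (A * ((\<gamma>+1) * (p - t) powr \<gamma> * (-1)) / (\<gamma>+1)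
                 + B * ((\<gamma>+2) * ((p - t) * (p - t) powr \<gamma>) * (-1)) / (\<gamma>+2))) (at t)"
      unfolding F_def[abs_def] cone_primitive_def
      by (intro derivative_intros DERIV_cdivide DERIV_cmult d1 d2)
    moreover have "- (A * ((\<gamma>+1) * (p - t) powr \<gamma> * (-1)) / (\<gamma>+1)
                 + B * ((\<gamma>+2) * ((p - t) * (p - t) powr \<gamma>) * (-1)) / (\<gamma>+2))
          = (A + B * (p - t)) * (p - t) powr \<gamma>"
    proof -
      have "\<gamma> + 1 \<noteq> 0" "\<gamma> + 2 \<noteq> 0" using assms by auto
      hence f1: "A * ((\<gamma>+1) * P * (-1)) / (\<gamma>+1) = - (A * P)"
        and f2: "B * ((\<gamma>+2) * Q * (-1)) / (\<gamma>+2) = - (B * Q)" for P Q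
        by (simp_all add: field_simps)
      show ?thesis unfolding f1 f2 by (simp add: algebra_simps)
    qed
    ultimately have "(F has_real_derivative (A + B * (p - t)) * (p - t) powr \<gamma>) (at t)"
      by simp
    thus "(F has_vector_derivative (A + B * (p - t)) * (p - t) powr \<gamma>) (at t)"
      by (simp add: has_real_derivative_iff_has_vector_derivative)
  qed
  thus ?thesis by (simp add: F_def)
qed

lemma powr_sub_scaled_powr_le:
  fixes \<gamma> \<delta> \<kappa> u v :: real
  assumes "0 < \<gamma>" "\<gamma> \<le> \<delta>" "0 \<le> \<kappa>" "0 \<le> v" "0 \<le> u"
    and "\<kappa> \<le> v \<and> v \<le> u \<or> u \<le> v \<and> v \<le> \<kappa>"
  shows "v powr \<delta> - (\<delta>/\<gamma>) * \<kappa> powr (\<delta>-\<gamma>) * v powr \<gamma> \<le> u powr \<delta> - (\<delta>/\<gamma>) * \<kappa> powr (\<delta>-\<gamma>) * u powr \<gamma>"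
proof -
  define F where "F z = z powr \<delta> - (\<delta>/\<gamma>) * \<kappa> powr (\<delta>-\<gamma>) * z powr \<gamma>" for z
  have dF: "(F has_real_derivative \<delta> * z powr (\<gamma> - 1) * (z powr (\<delta> - \<gamma>) - \<kappa> powr (\<delta> - \<gamma>))) (at z)"
    if "z > 0" for z
  proof -
    have "z powr (\<delta> - 1) = z powr (\<gamma> - 1) * z powr (\<delta> - \<gamma>)"
      using that by (simp add: powr_add[symmetric])
    moreover have "(\<delta>/\<gamma>) * \<kappa> powr (\<delta>-\<gamma>) * \<gamma> = \<delta> * \<kappa> powr (\<delta>-\<gamma>)"
      using assms by simp
    moreover have "(F has_real_derivative \<delta> * z powr (\<delta> - 1) - (\<delta>/\<gamma>) * \<kappa> powr (\<delta>-\<gamma>) * (\<gamma> * z powr (\<gamma> - 1))) (at z)"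
      unfolding F_def[abs_def]
      using DERIV_fun_powr[OF DERIV_ident, of z \<delta>] DERIV_fun_powr[OF DERIV_ident, of z \<gamma>] that
      by (intro derivative_intros DERIV_cmult) auto
    ultimately show ?thesis using assms by (simp add: algebra_simps)
  qed
  have cF: "continuous_on {s..t} F" if "0 \<le> s" for s t
    unfolding F_def by (intro continuous_intros continuous_on_powr') (use that assms in auto)
  from assms(6) show ?thesis
  proof
    assume A: "\<kappa> \<le> v \<and> v \<le> u"
    have "F v \<le> F u"
    proof (rule DERIV_nonneg_imp_increasing_open[OF _ _ cF])
      fix z assume z: "v < z" "z < u"
      have "\<kappa> powr (\<delta> - \<gamma>) \<le> z powr (\<delta> - \<gamma>)" using A z assms by (intro powr_mono2) auto
      hence "\<delta> * z powr (\<gamma> - 1) * (z powr (\<delta> - \<gamma>) - \<kappa> powr (\<delta> - \<gamma>)) \<ge> 0"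
        using assms by simp
      moreover have "z > 0" using z A assms by auto
      ultimately show "\<exists>y. (F has_real_derivative y) (at z) \<and> 0 \<le> y"
        using dF by blast
    qed (use A assms in auto)
    thus ?thesis by (simp add: F_def)
  next
    assume A: "u \<le> v \<and> v \<le> \<kappa>"
    have "- F u \<le> - F v"
    proof (rule DERIV_nonneg_imp_increasing_open[of u v "\<lambda>z. - F z"])
      fix z assume z: "u < z" "z < v"
      have "z powr (\<delta> - \<gamma>) \<le> \<kappa> powr (\<delta> - \<gamma>)" using A z assms by (intro powr_mono2) auto
      hence "- (\<delta> * z powr (\<gamma> - 1) * (z powr (\<delta> - \<gamma>) - \<kappa> powr (\<delta> - \<gamma>))) \<ge> 0"
        using assms by (simp add: mult_nonneg_nonpos)
      moreover have "z > 0" using z A assms by auto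
      ultimately show "\<exists>y. ((\<lambda>z. - F z) has_real_derivative y) (at z) \<and> 0 \<le> y"
        using DERIV_minus[OF dF] by blast
    next
      show "continuous_on {u..v} (\<lambda>z. - F z)" by (intro continuous_intros cF) (use assms in auto)
    qed (use A in auto)
    thus ?thesis by (simp add: F_def)
  qed
qed

lemma bathtub_le:
  fixes f g :: "real \<Rightarrow> real"
  assumes "a \<le> c" "c \<le> m"
    and "(f has_integral F) {a..m}" "((\<lambda>t. (m - t) * f t) has_integral MF) {a..m}"
    and "(g has_integral G) {c..m}" "((\<lambda>t. (m - t) * g t) has_integral MG) {c..m}"
    and "\<And>t. t \<in> {a..c} \<Longrightarrow> 0 \<le> f t" "\<And>t. t \<in> {c..m} \<Longrightarrow> f t \<le> g t"
  shows "(m - c) * (F - G) \<le> MF - MG"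
proof -
  define w where "w t = (m - t) * f t" for t
  have f: "f integrable_on {u..v}" and w: "w integrable_on {u..v}" if "a \<le> u" "v \<le> m" for u v
    unfolding w_def[abs_def] using integrable_on_subinterval[of _ "{a..m}" u v] assms(3,4) that
    by auto
  have F: "F = integral {a..c} f + integral {c..m} f"
    using Henstock_Kurzweil_Integration.integral_combine[OF assms(1,2) f] integral_unique[OF assms(3)]
    by simp
  have MF: "MF = integral {a..c} w + integral {c..m} w"
    using Henstock_Kurzweil_Integration.integral_combine[OF assms(1,2) w] integral_unique[OF assms(4)]
    by (simp add: w_def[abs_def])
  have "(m - c) * integral {a..c} f \<le> integral {a..c} w"
  proof (rule has_integral_le)
    show "((\<lambda>t. (m - c) * f t) has_integral (m - c) * integral {a..c} f) {a..c}"
      using f assms by (intro has_integral_mult_right integrable_integral) auto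
    show "(w has_integral integral {a..c} w) {a..c}" using w assms by auto
  qed (use assms in \<open>auto simp: w_def intro!: mult_right_mono\<close>)
  moreover have "(m - c) * (integral {c..m} f - G) \<le> integral {c..m} w - MG"
  proof (rule has_integral_le)
    show "((\<lambda>t. (m - c) * (f t - g t)) has_integral (m - c) * (integral {c..m} f - G)) {c..m}"
      using f assms by (intro has_integral_mult_right has_integral_diff integrable_integral) auto
    show "((\<lambda>t. w t - (m - t) * g t) has_integral integral {c..m} w - MG) {c..m}"
      using w assms by (intro has_integral_diff integrable_integral) auto
    fix t assume t: "t \<in> {c..m}"
    have "(m - c) * (f t - g t) \<le> (m - t) * (f t - g t)"
      using t assms(8)[OF t] by (intro mult_right_mono_neg) auto
    thus "(m - c) * (f t - g t) \<le> w t - (m - t) * g t" by (simp add: w_def algebra_simps)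
  qed
  ultimately show ?thesis unfolding F MF by (simp add: algebra_simps)
qed

lemma moment_defect_deriv_nonneg:
  fixes P\<^sub>\<alpha> P\<^sub>\<beta> M\<^sub>\<beta> H\<^sub>\<alpha> H\<^sub>\<beta> \<alpha> \<beta> :: real
  assumes "P\<^sub>\<beta> > 0" "H\<^sub>\<beta> > 0" "M\<^sub>\<beta> \<ge> 0" "P\<^sub>\<alpha> \<ge> 0" "0 < \<beta>" "\<beta> \<le> \<alpha>"
    and moment: "(\<beta> + 2) * M\<^sub>\<beta> \<le> (\<beta> + 1) * P\<^sub>\<beta> * P\<^sub>\<beta> / H\<^sub>\<beta>"
    and mass: "(\<beta> + 1) * P\<^sub>\<beta> * H\<^sub>\<alpha> / H\<^sub>\<beta> \<le> (\<alpha> + 1) * P\<^sub>\<alpha>"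
  shows "0 \<le> (\<alpha> + 2) * P\<^sub>\<alpha> - (\<beta> + 2) * (((P\<^sub>\<beta> * P\<^sub>\<alpha> + H\<^sub>\<alpha> * M\<^sub>\<beta>) * P\<^sub>\<beta> - M\<^sub>\<beta> * P\<^sub>\<alpha> * H\<^sub>\<beta>) / (P\<^sub>\<beta> * P\<^sub>\<beta>))"
proof -
  define m where "m = (\<beta> + 2) * M\<^sub>\<beta> / P\<^sub>\<beta>"
  define X where "X = H\<^sub>\<alpha> - P\<^sub>\<alpha> * H\<^sub>\<beta> / P\<^sub>\<beta>"
  have E: "(\<alpha> + 2) * P\<^sub>\<alpha> - (\<beta> + 2) * (((P\<^sub>\<beta> * P\<^sub>\<alpha> + H\<^sub>\<alpha> * M\<^sub>\<beta>) * P\<^sub>\<beta> - M\<^sub>\<beta> * P\<^sub>\<alpha> * H\<^sub>\<beta>) / (P\<^sub>\<beta> * P\<^sub>\<beta>))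
      = (\<alpha> - \<beta>) * P\<^sub>\<alpha> - m * X"
    unfolding m_def X_def using assms(1) by (simp add: field_simps)
  have m0: "m \<ge> 0" using assms by (simp add: m_def)
  have m1: "m \<le> (\<beta> + 1) * P\<^sub>\<beta> / H\<^sub>\<beta>"
    using divide_right_mono[OF moment, of P\<^sub>\<beta>] assms(1) by (simp add: m_def)
  have "m * X \<le> (\<alpha> - \<beta>) * P\<^sub>\<alpha>"
  proof (cases "X \<le> 0")
    case True
    hence "m * X \<le> 0" using m0 by (simp add: mult_nonneg_nonpos)
    also have "0 \<le> (\<alpha> - \<beta>) * P\<^sub>\<alpha>" using assms by simp
    finally show ?thesis .
  next
    case False
    hence "m * X \<le> ((\<beta> + 1) * P\<^sub>\<beta> / H\<^sub>\<beta>) * X" using m1 by (intro mult_right_mono) auto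
    also have "\<dots> = (\<beta> + 1) * P\<^sub>\<beta> * H\<^sub>\<alpha> / H\<^sub>\<beta> - (\<beta> + 1) * P\<^sub>\<alpha>"
      unfolding X_def using assms(1,2) by (simp add: field_simps)
    also have "\<dots> \<le> (\<alpha> - \<beta>) * P\<^sub>\<alpha>" using mass by (simp add: algebra_simps)
    finally show ?thesis .
  qed
  thus ?thesis using E by simp
qed

lemma powr_div_mult_powr_add:
  fixes H G e k :: real
  assumes "H > 0" "G > 0"
  shows "(H / G) powr e * G powr (e + k) = H powr e * G powr k"
  using assms by (simp add: powr_divide powr_add)

section \<open>Concave profiles\<close>

locale concave_profile =
  fixes a b :: real and h :: "real \<Rightarrow> real"
  assumes less: "a < b"
    and concave: "concave_on {a..b} h"
    and nonneg: "\<And>t. t \<in> {a..b} \<Longrightarrow> h t \<ge> 0"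
    and nonzero: "\<exists>t\<in>{a..b}. h t \<noteq> 0"
begin

lemma chord_le:
  assumes "a \<le> u" "u < v" "v \<le> b" "u \<le> t" "t \<le> v"
  shows "(v - t) * h u + (t - u) * h v \<le> (v - u) * h t"
proof -
  define \<theta> where "\<theta> = (t - u) / (v - u)"
  have \<theta>: "0 \<le> \<theta>" "\<theta> \<le> 1" "\<theta> * (v - u) = t - u" "(1 - \<theta>) * (v - u) = v - t"
    using assms by (auto simp: \<theta>_def field_simps)
  have "(1 - \<theta>) * u + \<theta> * v = t"
    using \<theta>(3) by (simp add: algebra_simps)
  hence "(1 - \<theta>) * h u + \<theta> * h v \<le> h t"
    using concave_onD[OF concave \<theta>(1,2), of u v] assms by auto
  hence "(v - u) * ((1 - \<theta>) * h u + \<theta> * h v) \<le> (v - u) * h t"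
    using assms by (intro mult_left_mono) auto
  moreover have "(v - u) * ((1 - \<theta>) * h u + \<theta> * h v) = ((1 - \<theta>) * (v - u)) * h u + (\<theta> * (v - u)) * h v"
    by (simp add: algebra_simps)
  ultimately show ?thesis
    unfolding \<theta>(3,4) by simp
qed

lemma min_le_between:
  assumes "a \<le> u" "u < v" "v \<le> b" "u \<le> t" "t \<le> v"
  shows "min (h u) (h v) \<le> h t"
proof -
  have "(v - t) * min (h u) (h v) + (t - u) * min (h u) (h v) \<le> (v - t) * h u + (t - u) * h v"
    using assms by (intro add_mono mult_left_mono) auto
  also have "\<dots> \<le> (v - u) * h t" by (rule chord_le[OF assms])
  finally have "(v - u) * min (h u) (h v) \<le> (v - u) * h t" by (simp add: algebra_simps)
  thus ?thesis using assms by simp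
qed

lemma pos_interior:
  assumes "a < t" "t < b"
  shows "h t > 0"
proof -
  obtain s where s: "s \<in> {a..b}" "h s > 0" using nonzero nonneg by force
  consider "s = t" | "s < t" | "t < s" by linarith
  thus ?thesis
  proof cases
    case 2
    have "(b - t) * h s + (t - s) * h b \<le> (b - s) * h t"
      using 2 s assms by (intro chord_le) auto
    moreover have "(b - t) * h s > 0" "(t - s) * h b \<ge> 0"
      using 2 s assms nonneg[of b] less by auto
    ultimately have "(b - s) * h t > 0" by linarith
    thus ?thesis using 2 assms by (simp add: zero_less_mult_iff)
  next
    case 3
    have "(s - t) * h a + (t - a) * h s \<le> (s - a) * h t"
      using 3 s assms by (intro chord_le) auto
    moreover have "(t - a) * h s > 0" "(s - t) * h a \<ge> 0"
      using 3 s assms nonneg[of a] less by auto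
    ultimately have "(s - a) * h t > 0" by linarith
    thus ?thesis using 3 s assms by (simp add: zero_less_mult_iff)
  qed (use s in simp)
qed

lemma bounded_above:
  obtains M where "M \<ge> 0" "\<And>t. t \<in> {a..b} \<Longrightarrow> h t \<le> M"
proof
  fix t assume t: "t \<in> {a..b}"
  have e: "(1 - 1/2) *\<^sub>R t + (1/2) *\<^sub>R (a + b - t) = (a + b) / 2" by (simp add: field_simps)
  have "(1 - 1/2) * h t + (1/2) * h (a + b - t) \<le> h ((a + b) / 2)"
    by (rule concave_onD[OF concave, of "1/2" t "a + b - t", unfolded e]) (use t in auto)
  moreover have "h (a + b - t) \<ge> 0" using t by (intro nonneg) auto
  ultimately show "h t \<le> 2 * h ((a + b) / 2)" by simp
qed (use nonneg less in simp)

lemma continuous_on_Ioo: "continuous_on {a<..<b} h"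
proof -
  have "convex_on {a..b} (\<lambda>x. - h x)"
    using concave by (simp add: concave_on_def)
  hence "convex_on {a<..<b} (\<lambda>x. - h x)"
    by (rule convex_on_subset) auto
  hence "continuous_on {a<..<b} (\<lambda>x. - h x)" by (intro convex_on_continuous) auto
  thus ?thesis using continuous_on_minus by fastforce
qed

lemma continuous_on_powr_Ioo: "continuous_on {a<..<b} (\<lambda>t. h t powr \<gamma>)"
  by (intro continuous_on_powr continuous_on_Ioo continuous_on_const) (use pos_interior in force)

lemma integrable_weighted_powr:
  assumes "continuous_on {a..b} w" "\<gamma> \<ge> 0" "a \<le> u" "v \<le> b"
  shows "(\<lambda>t. w t * h t powr \<gamma>) integrable_on {u..v}"
proof (rule integrable_on_subinterval)
  obtain M where M: "M \<ge> 0" "\<And>t. t \<in> {a..b} \<Longrightarrow> h t \<le> M" using bounded_above by blast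
  obtain W where W: "\<And>t. t \<in> {a..b} \<Longrightarrow> \<bar>w t\<bar> \<le> W"
    using continuous_on_compact_bound[OF compact_Icc assms(1)] by auto
  show "(\<lambda>t. w t * h t powr \<gamma>) integrable_on {a..b}"
  proof (rule integrable_on_Icc_if_bounded_continuous_on_Ioo)
    show "continuous_on {a<..<b} (\<lambda>t. w t * h t powr \<gamma>)"
      by (intro continuous_intros continuous_on_powr_Ioo continuous_on_subset[OF assms(1)]) auto
    fix t assume t: "t \<in> {a<..<b}"
    have "h t powr \<gamma> \<le> M powr \<gamma>"
      using t M(2)[of t] pos_interior[of t] assms(2) by (intro powr_mono2) auto
    hence "\<bar>w t\<bar> * \<bar>h t powr \<gamma>\<bar> \<le> W * M powr \<gamma>"
      using t W[of t] by (intro mult_mono) auto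
    thus "\<bar>w t * h t powr \<gamma>\<bar> \<le> W * M powr \<gamma>" by (simp add: abs_mult)
  qed
qed (use assms in auto)

lemma integrable_powr: "\<gamma> \<ge> 0 \<Longrightarrow> a \<le> u \<Longrightarrow> v \<le> b \<Longrightarrow> (\<lambda>t. h t powr \<gamma>) integrable_on {u..v}"
  using integrable_weighted_powr[of "\<lambda>_. 1"] by simp

lemma integral_weighted_powr_pos:
  assumes "\<gamma> > 0" "a \<le> u" "u < v" "v \<le> b" "continuous_on {a..b} w"
    and "\<And>t. t \<in> {u..v} \<Longrightarrow> 0 \<le> w t"
    and "\<epsilon> > 0" "\<And>t. t \<in> {(2 * u + v) / 3 .. (u + 2 * v) / 3} \<Longrightarrow> w t \<ge> \<epsilon>"
  shows "integral {u..v} (\<lambda>t. w t * h t powr \<gamma>) > 0"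
proof -
  define u' where "u' = (2 * u + v) / 3"
  define v' where "v' = (u + 2 * v) / 3"
  have uv: "u < u'" "u' < v'" "v' < v" using assms by (auto simp: u'_def v'_def)
  define m where "m = min (h u') (h v')"
  have m: "m > 0" using pos_interior[of u'] pos_interior[of v'] uv assms by (auto simp: m_def)
  show ?thesis
  proof (rule integral_pos_if_ge_on_subinterval)
    show "(\<lambda>t. w t * h t powr \<gamma>) integrable_on {u..v}"
      using assms by (intro integrable_weighted_powr) auto
    fix t assume t: "t \<in> {u'..v'}"
    hence "m powr \<gamma> \<le> h t powr \<gamma>"
      unfolding m_def using uv assms m by (intro powr_mono2 min_le_between) (auto simp: m_def)
    moreover have "\<epsilon> \<le> w t" using assms(8) t by (simp add: u'_def v'_def)
    ultimately show "\<epsilon> * m powr \<gamma> \<le> w t * h t powr \<gamma>"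
      using assms m by (intro mult_mono) auto
  qed (use uv assms m in auto)
qed

lemma integral_powr_pos:
  "\<gamma> > 0 \<Longrightarrow> a \<le> u \<Longrightarrow> u < v \<Longrightarrow> v \<le> b \<Longrightarrow> integral {u..v} (\<lambda>t. h t powr \<gamma>) > 0"
  using integral_weighted_powr_pos[of \<gamma> u v "\<lambda>_. 1" 1] by simp

definition mass :: "real \<Rightarrow> real" where
  "mass \<gamma> = integral {a..b} (\<lambda>t. h t powr \<gamma>)"

definition head_mass :: "real \<Rightarrow> real \<Rightarrow> real" where
  "head_mass \<gamma> x = integral {a..x} (\<lambda>t. h t powr \<gamma>)"

definition tail_mass :: "real \<Rightarrow> real \<Rightarrow> real" where
  "tail_mass \<gamma> x = integral {x..b} (\<lambda>t. h t powr \<gamma>)"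

lemma head_mass_b [simp]: "head_mass \<gamma> b = mass \<gamma>"
  and tail_mass_a [simp]: "tail_mass \<gamma> a = mass \<gamma>"
  by (simp_all add: head_mass_def tail_mass_def mass_def)

lemma mass_pos: "\<gamma> > 0 \<Longrightarrow> mass \<gamma> > 0"
  unfolding mass_def using integral_powr_pos less by simp

lemma head_mass_pos: "\<gamma> > 0 \<Longrightarrow> a < x \<Longrightarrow> x \<le> b \<Longrightarrow> head_mass \<gamma> x > 0"
  unfolding head_mass_def using integral_powr_pos by simp

lemma tail_mass_pos: "\<gamma> > 0 \<Longrightarrow> a \<le> x \<Longrightarrow> x < b \<Longrightarrow> tail_mass \<gamma> x > 0"
  unfolding tail_mass_def using integral_powr_pos by simp

lemma head_mass_add_tail_mass:
  "\<gamma> \<ge> 0 \<Longrightarrow> a \<le> x \<Longrightarrow> x \<le> b \<Longrightarrow> head_mass \<gamma> x + tail_mass \<gamma> x = mass \<gamma>"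
  unfolding head_mass_def tail_mass_def mass_def
  by (rule Henstock_Kurzweil_Integration.integral_combine) (use integrable_powr less in auto)

lemma tail_mass_antimono: "\<gamma> \<ge> 0 \<Longrightarrow> a \<le> x \<Longrightarrow> x \<le> y \<Longrightarrow> y \<le> b \<Longrightarrow> tail_mass \<gamma> y \<le> tail_mass \<gamma> x"
  unfolding tail_mass_def by (rule integral_subset_le) (use integrable_powr nonneg in auto)

lemma has_real_derivative_head_mass:
  "x \<in> {a<..<b} \<Longrightarrow> \<gamma> \<ge> 0 \<Longrightarrow> (head_mass \<gamma> has_real_derivative h x powr \<gamma>) (at x)"
  unfolding head_mass_def[abs_def]
  by (rule has_real_derivative_integral_interior[OF integrable_powr continuous_on_powr_Ioo]) auto

lemma continuous_on_head_mass: "\<gamma> \<ge> 0 \<Longrightarrow> continuous_on {a..b} (head_mass \<gamma>)"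
  unfolding head_mass_def[abs_def] by (rule indefinite_integral_continuous_1[OF integrable_powr]) auto

lemma has_real_derivative_tail_mass:
  assumes "x \<in> {a<..<b}" "\<gamma> \<ge> 0"
  shows "(tail_mass \<gamma> has_real_derivative - (h x powr \<gamma>)) (at x)"
proof -
  have "((\<lambda>y. mass \<gamma> - head_mass \<gamma> y) has_real_derivative - (h x powr \<gamma>)) (at x)"
    using has_real_derivative_head_mass[OF assms] by (auto intro!: derivative_eq_intros)
  thus ?thesis
    by (rule has_field_derivative_transform_within_open[where S="{a<..<b}"])
       (use assms head_mass_add_tail_mass in \<open>auto simp: algebra_simps\<close>)
qed

lemma continuous_on_tail_mass:
  assumes "\<gamma> \<ge> 0"
  shows "continuous_on {a..b} (tail_mass \<gamma>)"
proof -
  have "continuous_on {a..b} (\<lambda>y. mass \<gamma> - head_mass \<gamma> y)"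
    by (intro continuous_intros continuous_on_head_mass assms)
  thus ?thesis
    by (rule continuous_on_eq) (use head_mass_add_tail_mass[of \<gamma>] assms in \<open>auto simp: algebra_simps\<close>)
qed

section \<open>Cones\<close>

text \<open>The cone at \<open>x\<close>: the linear function with value \<open>h x\<close> at \<open>x\<close> whose \<open>\<gamma>\<close>-th power has
  the same mass on \<open>[x, apex \<gamma> x]\<close> as \<open>h\<^sup>\<gamma>\<close> on \<open>[x, b]\<close>.\<close>

definition cone_width :: "real \<Rightarrow> real \<Rightarrow> real" where
  "cone_width \<gamma> x = (\<gamma> + 1) * tail_mass \<gamma> x / h x powr \<gamma>"

definition apex :: "real \<Rightarrow> real \<Rightarrow> real" where
  "apex \<gamma> x = x + cone_width \<gamma> x"

definition cone_height :: "real \<Rightarrow> real \<Rightarrow> real \<Rightarrow> real" where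
  "cone_height \<gamma> x t = h x * (apex \<gamma> x - t) / cone_width \<gamma> x"

lemma cone_affine: "(s - r) * cone_height \<gamma> x t = (s - t) * cone_height \<gamma> x r + (t - r) * cone_height \<gamma> x s"
proof -
  define c where "c = h x / cone_width \<gamma> x"
  have "cone_height \<gamma> x = (\<lambda>t. c * (apex \<gamma> x - t))"
    by (simp add: cone_height_def c_def fun_eq_iff)
  thus ?thesis by (simp add: algebra_simps)
qed

context
  fixes \<gamma> x :: real
  assumes \<gamma>: "\<gamma> > 0" and x: "a < x" "x < b"
begin

lemma cone_width_pos: "cone_width \<gamma> x > 0"
  unfolding cone_width_def using tail_mass_pos[of \<gamma> x] pos_interior[of x] \<gamma> x by simp

lemma tail_mass_eq_cone: "tail_mass \<gamma> x = h x powr \<gamma> * cone_width \<gamma> x / (\<gamma> + 1)"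
  unfolding cone_width_def using pos_interior[of x] \<gamma> x by simp

lemma x_less_apex: "x < apex \<gamma> x"
  using cone_width_pos by (simp add: apex_def)

lemma cone_base [simp]: "cone_height \<gamma> x x = h x"
  using cone_width_pos by (simp add: cone_height_def apex_def)

lemma cone_apex [simp]: "cone_height \<gamma> x (apex \<gamma> x) = 0"
  by (simp add: cone_height_def)

lemma cone_antimono: "t \<le> s \<Longrightarrow> cone_height \<gamma> x s \<le> cone_height \<gamma> x t"
  using cone_width_pos pos_interior[of x] x by (simp add: cone_height_def divide_right_mono)

lemma cone_nonneg: "t \<le> apex \<gamma> x \<Longrightarrow> 0 \<le> cone_height \<gamma> x t"
  using cone_antimono[of t "apex \<gamma> x"] by simp

lemma cone_neg: "apex \<gamma> x < t \<Longrightarrow> cone_height \<gamma> x t < 0"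
  using cone_width_pos pos_interior[of x] x by (simp add: cone_height_def divide_neg_pos mult_pos_neg)

lemma integrable_cone_powr:
  assumes "v \<le> apex \<gamma> x" "e > 0" "continuous_on {u..v} w"
  shows "(\<lambda>t. w t * cone_height \<gamma> x t powr e) integrable_on {u..v}"
proof -
  have "continuous_on {u..v} (cone_height \<gamma> x)"
    unfolding cone_height_def[abs_def] using cone_width_pos by (intro continuous_intros) auto
  moreover have "\<forall>t\<in>{u..v}. 0 \<le> cone_height \<gamma> x t \<and> (cone_height \<gamma> x t = 0 \<longrightarrow> 0 < e)"
    using cone_nonneg assms by auto
  ultimately show ?thesis
    by (intro integrable_continuous_real continuous_intros continuous_on_powr' assms(3)) auto
qed

lemma has_integral_cone_powr:
  assumes "u \<le> v" "v \<le> apex \<gamma> x" "e > 0"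
  shows "((\<lambda>t. (A + B * (apex \<gamma> x - t)) * cone_height \<gamma> x t powr e) has_integral
           (h x / cone_width \<gamma> x) powr e *
           (cone_primitive A B e (apex \<gamma> x - u) - cone_primitive A B e (apex \<gamma> x - v))) {u..v}"
proof -
  have eq: "cone_height \<gamma> x t powr e = (h x / cone_width \<gamma> x) powr e * (apex \<gamma> x - t) powr e" for t
    unfolding cone_height_def by (simp add: powr_mult[symmetric])
  have "((\<lambda>t. (h x / cone_width \<gamma> x) powr e * ((A + B * (apex \<gamma> x - t)) * (apex \<gamma> x - t) powr e))
          has_integral (h x / cone_width \<gamma> x) powr e *
           (cone_primitive A B e (apex \<gamma> x - u) - cone_primitive A B e (apex \<gamma> x - v))) {u..v}"
    by (intro has_integral_mult_right has_integral_affine_times_powr assms)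
  thus ?thesis by (rule has_integral_eq[rotated]) (simp add: eq)
qed

lemma cone_mass:
  assumes "e > 0"
  shows "((\<lambda>t. cone_height \<gamma> x t powr e) has_integral h x powr e * cone_width \<gamma> x / (e + 1))
           {x..apex \<gamma> x}"
proof -
  have "((\<lambda>t. (1 + 0 * (apex \<gamma> x - t)) * cone_height \<gamma> x t powr e) has_integral
          (h x / cone_width \<gamma> x) powr e * (cone_primitive 1 0 e (apex \<gamma> x - x)
            - cone_primitive 1 0 e (apex \<gamma> x - apex \<gamma> x))) {x..apex \<gamma> x}"
    by (rule has_integral_cone_powr) (use assms x_less_apex in auto)
  moreover have "(h x / cone_width \<gamma> x) powr e * cone_width \<gamma> x powr (e + 1) = h x powr e * cone_width \<gamma> x"
    using powr_div_mult_powr_add[OF pos_interior[OF x] cone_width_pos, of e 1] cone_width_pos by simp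
  ultimately show ?thesis
    by (simp add: apex_def cone_primitive_def)
qed

lemma cone_moment:
  assumes "e > 0"
  shows "((\<lambda>t. (t - x) * cone_height \<gamma> x t powr e) has_integral
           h x powr e * cone_width \<gamma> x ^ 2 / ((e + 1) * (e + 2))) {x..apex \<gamma> x}"
proof -
  let ?G = "cone_width \<gamma> x"
  have "((\<lambda>t. (?G + (-1) * (apex \<gamma> x - t)) * cone_height \<gamma> x t powr e) has_integral
          (h x / ?G) powr e * cone_primitive ?G (-1) e ?G) {x..apex \<gamma> x}"
    using has_integral_cone_powr[of x "apex \<gamma> x" e ?G "-1"] assms x_less_apex
    by (simp add: apex_def)
  moreover have "(h x / ?G) powr e * cone_primitive ?G (-1) e ?G = h x powr e * ?G ^ 2 / ((e + 1) * (e + 2))"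
  proof -
    have "?G * ?G powr (e + 1) = ?G powr (e + 2)"
      using powr_add[of ?G "e + 1" 1] cone_width_pos by (simp add: add_ac)
    hence "cone_primitive ?G (-1) e ?G = ?G powr (e + 2) * (1 / (e + 1) - 1 / (e + 2))"
      by (simp add: cone_primitive_def algebra_simps)
    also have "1 / (e + 1) - 1 / (e + 2) = 1 / ((e + 1) * (e + 2))"
      using assms by (simp add: field_simps)
    finally show ?thesis
      using powr_div_mult_powr_add[OF pos_interior[OF x] cone_width_pos, of e 2] cone_width_pos
      by (simp add: mult.assoc[symmetric])
  qed
  ultimately have "((\<lambda>t. (?G + (-1) * (apex \<gamma> x - t)) * cone_height \<gamma> x t powr e) has_integral
          h x powr e * ?G ^ 2 / ((e + 1) * (e + 2))) {x..apex \<gamma> x}"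
    by simp
  thus ?thesis by (rule has_integral_eq[rotated]) (simp add: apex_def)
qed

lemma cone_mass_pos:
  assumes "u < apex \<gamma> x" "e > 0"
  shows "integral {u..apex \<gamma> x} (\<lambda>t. cone_height \<gamma> x t powr e) > 0"
proof -
  have "((\<lambda>t. cone_height \<gamma> x t powr e) has_integral
          (h x / cone_width \<gamma> x) powr e * ((apex \<gamma> x - u) powr (e + 1) / (e + 1))) {u..apex \<gamma> x}"
    using has_integral_cone_powr[of u "apex \<gamma> x" e 1 0] assms by (simp add: cone_primitive_def)
  thus ?thesis
    using assms cone_width_pos pos_interior[of x] x by (simp add: integral_unique)
qed

text \<open>The left end point is where the truncated cone has its centroid at \<open>x\<close>.\<close>

lemma truncated_cone_integrals:
  defines "r \<equiv> (\<gamma> + 2) / (\<gamma> + 1)"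
  shows "((\<lambda>t. cone_height \<gamma> x t powr \<gamma>) has_integral tail_mass \<gamma> x * (r powr (\<gamma> + 1) - 1))
           {apex \<gamma> x - r * cone_width \<gamma> x..x}"
    and "((\<lambda>t. (x - t) * cone_height \<gamma> x t powr \<gamma>) has_integral
           tail_mass \<gamma> x * cone_width \<gamma> x / (\<gamma> + 2)) {apex \<gamma> x - r * cone_width \<gamma> x..x}"
proof -
  let ?G = "cone_width \<gamma> x" and ?p = "apex \<gamma> x" and ?K = "cone_height \<gamma> x"
  let ?\<Phi> = "tail_mass \<gamma> x" and ?c = "apex \<gamma> x - r * cone_width \<gamma> x"
  have G: "?G > 0" by (rule cone_width_pos)
  have r: "r > 1" using \<gamma> by (simp add: r_def)
  have cx: "?c < x" using G r by (simp add: apex_def algebra_simps)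
  have scale: "(h x / ?G) powr \<gamma> * ?G powr (\<gamma> + 1) = h x powr \<gamma> * ?G"
    using powr_div_mult_powr_add[OF pos_interior[OF x] G, of \<gamma> 1] G by simp
  have \<Phi>: "?\<Phi> = h x powr \<gamma> * ?G / (\<gamma> + 1)" by (rule tail_mass_eq_cone)
  show "((\<lambda>t. ?K t powr \<gamma>) has_integral ?\<Phi> * (r powr (\<gamma> + 1) - 1)) {?c..x}"
  proof -
    have "((\<lambda>t. (1 + 0 * (?p - t)) * ?K t powr \<gamma>) has_integral
            (h x / ?G) powr \<gamma> * (cone_primitive 1 0 \<gamma> (r * ?G) - cone_primitive 1 0 \<gamma> ?G)) {?c..x}"
      using has_integral_cone_powr[of ?c x \<gamma> 1 0] cx \<gamma> G by (simp add: apex_def)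
    moreover have "(r * ?G) powr (\<gamma> + 1) = r powr (\<gamma> + 1) * ?G powr (\<gamma> + 1)"
      using r G by (simp add: powr_mult)
    ultimately show ?thesis
      using scale \<Phi> by (simp add: cone_primitive_def algebra_simps diff_divide_distrib)
  qed
  have int: "((\<lambda>t. (- ?G + 1 * (?p - t)) * ?K t powr \<gamma>) has_integral
          (h x / ?G) powr \<gamma> * (cone_primitive (- ?G) 1 \<gamma> (r * ?G) - cone_primitive (- ?G) 1 \<gamma> ?G)) {?c..x}"
    using has_integral_cone_powr[of ?c x \<gamma> "- ?G" 1] cx \<gamma> G by (simp add: apex_def)
  have at_c: "cone_primitive (- ?G) 1 \<gamma> (r * ?G) = 0"
  proof -
    have "r * ?G / (\<gamma> + 2) = ?G / (\<gamma> + 1)"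
      using \<gamma> by (simp add: r_def)
    hence z: "- ?G / (\<gamma> + 1) + 1 * (r * ?G) / (\<gamma> + 2) = 0"
      by simp
    have nn: "r * ?G \<ge> 0" using r G by simp
    show ?thesis unfolding cone_primitive_eq[OF nn] z by simp
  qed
  have at_x: "cone_primitive (- ?G) 1 \<gamma> ?G = - (?G powr (\<gamma> + 1) * ?G / ((\<gamma> + 1) * (\<gamma> + 2)))"
    using G \<gamma> by (simp add: cone_primitive_eq field_simps)
  have "(h x / ?G) powr \<gamma> * (0 - - (?G powr (\<gamma> + 1) * ?G / ((\<gamma> + 1) * (\<gamma> + 2))))
      = (h x powr \<gamma> * ?G) * ?G / ((\<gamma> + 1) * (\<gamma> + 2))"
    using scale by (simp add: algebra_simps)
  also have "\<dots> = ?\<Phi> * ?G / (\<gamma> + 2)"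
    unfolding \<Phi> using \<gamma> by (simp add: field_simps)
  finally have val: "(h x / ?G) powr \<gamma> * (0 - - (?G powr (\<gamma> + 1) * ?G / ((\<gamma> + 1) * (\<gamma> + 2))))
      = ?\<Phi> * ?G / (\<gamma> + 2)" .
  from int[unfolded at_c at_x val]
  show "((\<lambda>t. (x - t) * ?K t powr \<gamma>) has_integral ?\<Phi> * ?G / (\<gamma> + 2)) {?c..x}"
    by (rule has_integral_eq[rotated]) (simp add: apex_def)
qed

lemma b_le_apex: "b \<le> apex \<gamma> x"
proof (rule ccontr)
  let ?p = "apex \<gamma> x"
  assume "\<not> b \<le> ?p"
  hence p: "x < ?p" "?p < b" using x_less_apex by auto
  have below: "cone_height \<gamma> x t \<le> h t" if t: "t \<in> {x..b}" for t
  proof -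
    have "(b - x) * cone_height \<gamma> x t = (b - t) * h x + (t - x) * cone_height \<gamma> x b"
      using cone_affine[of b x \<gamma> x t] by simp
    also have "\<dots> \<le> (b - t) * h x + (t - x) * h b"
      using t cone_neg[of b] nonneg[of b] less p by (intro add_left_mono mult_left_mono) auto
    also have "\<dots> \<le> (b - x) * h t" by (rule chord_le) (use t x in auto)
    finally show ?thesis using x by simp
  qed
  have "tail_mass \<gamma> x = integral {x..?p} (\<lambda>t. cone_height \<gamma> x t powr \<gamma>)"
    using integral_unique[OF cone_mass[OF \<gamma>]] tail_mass_eq_cone by simp
  also have "\<dots> \<le> integral {x..?p} (\<lambda>t. h t powr \<gamma>)"
  proof (rule integral_le)
    show "(\<lambda>t. cone_height \<gamma> x t powr \<gamma>) integrable_on {x..?p}" using cone_mass[OF \<gamma>] by blast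
    show "(\<lambda>t. h t powr \<gamma>) integrable_on {x..?p}" using integrable_powr \<gamma> x p by auto
    fix t assume "t \<in> {x..?p}"
    thus "cone_height \<gamma> x t powr \<gamma> \<le> h t powr \<gamma>"
      using below cone_nonneg \<gamma> p by (intro powr_mono2) auto
  qed
  also have "\<dots> < integral {x..?p} (\<lambda>t. h t powr \<gamma>) + integral {?p..b} (\<lambda>t. h t powr \<gamma>)"
    using integral_powr_pos[OF \<gamma>, of ?p b] x p by simp
  also have "\<dots> = tail_mass \<gamma> x"
    unfolding tail_mass_def
    by (rule Henstock_Kurzweil_Integration.integral_combine) (use integrable_powr \<gamma> x p in auto)
  finally show False by simp
qed

lemma cone_mass_split:
  "integral {x..b} (\<lambda>t. cone_height \<gamma> x t powr \<gamma>)
     + integral {b..apex \<gamma> x} (\<lambda>t. cone_height \<gamma> x t powr \<gamma>) = tail_mass \<gamma> x"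
  using Henstock_Kurzweil_Integration.integral_combine[OF _ b_le_apex integrable_cone_powr[where w="\<lambda>_. 1"], of x]
    x \<gamma> integral_unique[OF cone_mass[OF \<gamma>]] tail_mass_eq_cone by simp

lemma cone_moment_split:
  "integral {x..b} (\<lambda>t. (t - x) * cone_height \<gamma> x t powr \<gamma>)
     + integral {b..apex \<gamma> x} (\<lambda>t. (t - x) * cone_height \<gamma> x t powr \<gamma>)
   = tail_mass \<gamma> x * cone_width \<gamma> x / (\<gamma> + 2)"
proof -
  have "integral {x..b} (\<lambda>t. (t - x) * cone_height \<gamma> x t powr \<gamma>)
        + integral {b..apex \<gamma> x} (\<lambda>t. (t - x) * cone_height \<gamma> x t powr \<gamma>)
      = integral {x..apex \<gamma> x} (\<lambda>t. (t - x) * cone_height \<gamma> x t powr \<gamma>)"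
    by (rule Henstock_Kurzweil_Integration.integral_combine)
       (use x b_le_apex \<gamma> in \<open>auto intro!: integrable_cone_powr continuous_intros\<close>)
  also have "\<dots> = h x powr \<gamma> * cone_width \<gamma> x ^ 2 / ((\<gamma> + 1) * (\<gamma> + 2))"
    by (rule integral_unique[OF cone_moment[OF \<gamma>]])
  finally show ?thesis using \<gamma> by (simp add: tail_mass_eq_cone power2_eq_square field_simps)
qed

lemma le_cone_on_left:
  assumes t: "t \<in> {a..x}"
  shows "h t \<le> cone_height \<gamma> x t"
proof (rule ccontr)
  let ?p = "apex \<gamma> x"
  assume "\<not> ?thesis"
  hence above: "cone_height \<gamma> x t < h t" by simp
  have tx: "t < x" using above t by (cases "t = x") auto
  have below: "h s < cone_height \<gamma> x s" if s: "s \<in> {x<..b}" for s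
  proof -
    have "(s - x) * h t + (x - t) * h s \<le> (s - t) * h x"
      by (rule chord_le) (use s t tx in auto)
    moreover have "(s - x) * cone_height \<gamma> x t < (s - x) * h t"
      using s above by (intro mult_strict_left_mono) auto
    moreover have "(s - t) * h x = (s - x) * cone_height \<gamma> x t + (x - t) * cone_height \<gamma> x s"
      using cone_affine[of s t \<gamma> x x] by simp
    ultimately have "(x - t) * h s < (x - t) * cone_height \<gamma> x s" by linarith
    thus ?thesis using tx by simp
  qed
  show False
  proof (cases "?p = b")
    case True
    thus False using below[of b] nonneg[of b] cone_apex x less by auto
  next
    case False
    hence pb: "b < ?p" using b_le_apex by simp
    have cone_int: "(\<lambda>t. cone_height \<gamma> x t powr \<gamma>) integrable_on {x..?p}"
      using cone_mass[OF \<gamma>] by blast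
    have "tail_mass \<gamma> x \<le> integral {x..b} (\<lambda>t. cone_height \<gamma> x t powr \<gamma>)"
      unfolding tail_mass_def
    proof (rule integral_le)
      show "(\<lambda>t. h t powr \<gamma>) integrable_on {x..b}" using integrable_powr \<gamma> x by auto
      show "(\<lambda>t. cone_height \<gamma> x t powr \<gamma>) integrable_on {x..b}"
        by (rule integrable_on_subinterval[OF cone_int]) (use pb in auto)
      fix s assume s: "s \<in> {x..b}"
      hence "h s \<le> cone_height \<gamma> x s" using below[of s] by (cases "s = x") auto
      thus "h s powr \<gamma> \<le> cone_height \<gamma> x s powr \<gamma>"
        using s nonneg[of s] x \<gamma> by (intro powr_mono2) auto
    qed
    also have "\<dots> < integral {x..b} (\<lambda>t. cone_height \<gamma> x t powr \<gamma>)
                    + integral {b..?p} (\<lambda>t. cone_height \<gamma> x t powr \<gamma>)"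
      using cone_mass_pos[OF pb \<gamma>] by simp
    also have "\<dots> = tail_mass \<gamma> x" by (rule cone_mass_split)
    finally show False by simp
  qed
qed

lemma single_crossing_cone:
  obtains x1 where "x1 \<in> {x..b}"
    "\<And>t. t \<in> {x..b} \<Longrightarrow> t < x1 \<Longrightarrow> cone_height \<gamma> x t \<le> h t"
    "\<And>t. t \<in> {x..b} \<Longrightarrow> x1 < t \<Longrightarrow> h t \<le> cone_height \<gamma> x t"
proof
  define S where "S = {s \<in> {x..b}. cone_height \<gamma> x s \<le> h s}"
  have xS: "x \<in> S" using x by (simp add: S_def)
  have bdd: "bdd_above S" by (rule bdd_aboveI[of _ b]) (auto simp: S_def)
  show "Sup S \<in> {x..b}"
    using xS bdd by (auto simp: S_def intro!: cSup_upper cSup_least)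
  fix t assume t: "t \<in> {x..b}"
  show "cone_height \<gamma> x t \<le> h t" if lt: "t < Sup S"
  proof -
    obtain s where s: "s \<in> S" "t < s" using less_cSup_iff[of S t] xS bdd lt by auto
    have "(s - t) * h x + (t - x) * h s \<le> (s - x) * h t"
      by (rule chord_le) (use s t x in \<open>auto simp: S_def\<close>)
    moreover have "(t - x) * cone_height \<gamma> x s \<le> (t - x) * h s"
      using s t by (intro mult_left_mono) (auto simp: S_def)
    moreover have "(s - x) * cone_height \<gamma> x t = (s - t) * h x + (t - x) * cone_height \<gamma> x s"
      using cone_affine[of s x \<gamma> x t] by simp
    ultimately have "(s - x) * cone_height \<gamma> x t \<le> (s - x) * h t" by linarith
    thus ?thesis using s t by (simp add: S_def)
  qed
  show "h t \<le> cone_height \<gamma> x t" if gt: "Sup S < t"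
    using cSup_upper[OF _ bdd, of t] gt t by (force simp: S_def)
qed

lemma tail_mass_ge_cone:
  assumes "\<gamma> \<le> \<delta>"
  shows "h x powr \<delta> * cone_width \<gamma> x / (\<delta> + 1) \<le> tail_mass \<delta> x"
proof -
  let ?p = "apex \<gamma> x" and ?K = "cone_height \<gamma> x"
  have \<delta>: "\<delta> > 0" using \<gamma> assms by simp
  obtain x1 where x1: "x1 \<in> {x..b}"
    and left: "\<And>t. t \<in> {x..b} \<Longrightarrow> t < x1 \<Longrightarrow> ?K t \<le> h t"
    and right: "\<And>t. t \<in> {x..b} \<Longrightarrow> x1 < t \<Longrightarrow> h t \<le> ?K t"
    using single_crossing_cone by blast
  define c where "c = (\<delta> / \<gamma>) * ?K x1 powr (\<delta> - \<gamma>)"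
  define F where "F u = u powr \<delta> - c * u powr \<gamma>" for u
  have \<kappa>: "0 \<le> ?K x1" using x1 b_le_apex by (intro cone_nonneg) auto
  have on_base: "F (?K t) \<le> F (h t)" if t: "t \<in> {x..b}" for t
    unfolding F_def c_def
  proof (rule powr_sub_scaled_powr_le[OF \<gamma> assms \<kappa>])
    show "0 \<le> ?K t" using t b_le_apex by (intro cone_nonneg) auto
    show "0 \<le> h t" using t x by (intro nonneg) auto
    show "?K x1 \<le> ?K t \<and> ?K t \<le> h t \<or> h t \<le> ?K t \<and> ?K t \<le> ?K x1"
      using left[OF t] right[OF t] cone_antimono[of t x1] cone_antimono[of x1 t]
      by (cases t x1 rule: linorder_cases) auto
  qed
  have beyond: "F (?K t) \<le> 0" if t: "t \<in> {b..?p}" for t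
  proof -
    have "0 \<le> ?K t" "?K t \<le> ?K x1" using t x1 by (auto intro!: cone_nonneg cone_antimono)
    hence "F (?K t) \<le> F 0"
      unfolding F_def c_def by (intro powr_sub_scaled_powr_le[OF \<gamma> assms \<kappa>]) auto
    thus ?thesis by (simp add: F_def)
  qed
  have cone_F: "((\<lambda>t. F (?K t)) has_integral
      h x powr \<delta> * cone_width \<gamma> x / (\<delta> + 1) - c * tail_mass \<gamma> x) {x..?p}"
    unfolding F_def tail_mass_eq_cone
    by (intro has_integral_diff has_integral_mult_right cone_mass \<gamma> \<delta>)
  have base_F: "((\<lambda>t. F (h t)) has_integral tail_mass \<delta> x - c * tail_mass \<gamma> x) {x..b}"
    unfolding F_def tail_mass_def using integrable_powr \<gamma> \<delta> x
    by (intro has_integral_diff has_integral_mult_right integrable_integral) auto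
  have int: "(\<lambda>t. F (?K t)) integrable_on {x..?p}" using cone_F by blast
  have "integral {x..?p} (\<lambda>t. F (?K t))
        = integral {x..b} (\<lambda>t. F (?K t)) + integral {b..?p} (\<lambda>t. F (?K t))"
    using Henstock_Kurzweil_Integration.integral_combine[OF _ _ int, of b] x b_le_apex by simp
  also have "\<dots> \<le> integral {x..b} (\<lambda>t. F (h t)) + 0"
  proof (rule add_mono)
    show "integral {x..b} (\<lambda>t. F (?K t)) \<le> integral {x..b} (\<lambda>t. F (h t))"
      by (rule integral_le) (use int b_le_apex on_base base_F in \<open>auto intro: integrable_on_subinterval\<close>)
    show "integral {b..?p} (\<lambda>t. F (?K t)) \<le> 0"
      using has_integral_le[OF integrable_integral has_integral_0, of "\<lambda>t. F (?K t)" "{b..?p}"]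
        integrable_on_subinterval[OF int, of b ?p] beyond x by auto
  qed
  finally show ?thesis
    using integral_unique[OF cone_F] integral_unique[OF base_F] by simp
qed

lemma tail_moment_le:
  "integral {x..b} (\<lambda>t. (t - x) * h t powr \<gamma>) \<le> tail_mass \<gamma> x * cone_width \<gamma> x / (\<gamma> + 2)"
proof -
  let ?p = "apex \<gamma> x" and ?k = "\<lambda>t. cone_height \<gamma> x t powr \<gamma>"
  obtain x1 where x1: "x1 \<in> {x..b}"
    and left: "\<And>t. t \<in> {x..b} \<Longrightarrow> t < x1 \<Longrightarrow> cone_height \<gamma> x t \<le> h t"
    and right: "\<And>t. t \<in> {x..b} \<Longrightarrow> x1 < t \<Longrightarrow> h t \<le> cone_height \<gamma> x t"
    using single_crossing_cone by blast
  \<comment> \<open>Moving the mass of \<open>h\<^sup>\<gamma>\<close> across the crossing point \<open>x1\<close> onto the cone, whose tail extends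
    beyond \<open>b\<close>, can only increase the first moment about \<open>x\<close>.\<close>
  have pb: "b \<le> ?p" by (rule b_le_apex)
  have k_int: "(\<lambda>t. w t * ?k t) integrable_on {u..v}"
    if "v \<le> ?p" "continuous_on {u..v} w" for u v w
    using integrable_cone_powr[OF that(1) \<gamma> that(2)] .
  have k_int': "?k integrable_on {u..v}" if "v \<le> ?p" for u v
    using k_int[of v u "\<lambda>_. 1"] that by simp
  have "integral {x..b} (\<lambda>t. (t - x) * h t powr \<gamma>)
      \<le> integral {x..b} (\<lambda>t. (t - x) * ?k t) + (x1 - x) * (tail_mass \<gamma> x - integral {x..b} ?k)"
  proof (rule has_integral_le)
    show "((\<lambda>t. (t - x) * h t powr \<gamma>) has_integral integral {x..b} (\<lambda>t. (t - x) * h t powr \<gamma>)) {x..b}"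
      using \<gamma> x by (intro integrable_integral integrable_weighted_powr) (auto intro!: continuous_intros)
    show "((\<lambda>t. (t - x) * ?k t + (x1 - x) * (h t powr \<gamma> - ?k t)) has_integral
        integral {x..b} (\<lambda>t. (t - x) * ?k t) + (x1 - x) * (tail_mass \<gamma> x - integral {x..b} ?k)) {x..b}"
      unfolding tail_mass_def using pb \<gamma> x
      by (intro has_integral_add has_integral_mult_right has_integral_diff integrable_integral
          integrable_powr k_int k_int') (auto intro!: continuous_intros)
    fix t assume t: "t \<in> {x..b}"
    have "0 \<le> (t - x1) * (?k t - h t powr \<gamma>)"
    proof (cases t x1 rule: linorder_cases)
      case less
      hence "?k t \<le> h t powr \<gamma>"
        using left[OF t] t pb \<gamma> by (intro powr_mono2 cone_nonneg) auto
      thus ?thesis using less by (intro mult_nonpos_nonpos) auto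
    next
      case greater
      hence "h t powr \<gamma> \<le> ?k t"
        using right[OF t] t nonneg[of t] x \<gamma> by (intro powr_mono2) auto
      thus ?thesis using greater by simp
    qed simp
    thus "(t - x) * h t powr \<gamma> \<le> (t - x) * ?k t + (x1 - x) * (h t powr \<gamma> - ?k t)"
      by (simp add: algebra_simps)
  qed
  also have "tail_mass \<gamma> x - integral {x..b} ?k = integral {b..?p} ?k"
    using cone_mass_split by simp
  also have "(x1 - x) * integral {b..?p} ?k \<le> integral {b..?p} (\<lambda>t. (t - x) * ?k t)"
  proof -
    have "integral {b..?p} (\<lambda>t. (x1 - x) * ?k t) \<le> integral {b..?p} (\<lambda>t. (t - x) * ?k t)"
    proof (rule integral_le)
      show "(\<lambda>t. (x1 - x) * ?k t) integrable_on {b..?p}"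
           "(\<lambda>t. (t - x) * ?k t) integrable_on {b..?p}"
        by (intro k_int continuous_intros order_refl)+
    qed (use x1 cone_nonneg in \<open>auto intro!: mult_right_mono\<close>)
    thus ?thesis by simp
  qed
  finally show ?thesis using cone_moment_split by simp
qed

end

section \<open>The centroid\<close>

abbreviation centroid :: "real \<Rightarrow> real" where
  "centroid \<gamma> \<equiv> g_alpha \<gamma> a b h"

lemma integral_centered_moment:
  assumes "\<gamma> > 0"
  shows "integral {a..b} (\<lambda>t. (t - c) * h t powr \<gamma>) = (centroid \<gamma> - c) * mass \<gamma>"
proof -
  have "((\<lambda>t. t * h t powr \<gamma> - c * h t powr \<gamma>) has_integral
          integral {a..b} (\<lambda>t. t * h t powr \<gamma>) - c * mass \<gamma>) {a..b}"
    unfolding mass_def using assms integrable_weighted_powr[of "\<lambda>t. t" \<gamma> a b]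
    by (intro has_integral_diff has_integral_mult_right integrable_integral integrable_powr) auto
  moreover have "integral {a..b} (\<lambda>t. t * h t powr \<gamma>) = centroid \<gamma> * mass \<gamma>"
    using mass_pos[OF assms] by (simp add: g_alpha_def mass_def)
  ultimately show ?thesis
    by (simp add: algebra_simps integral_unique)
qed

lemma centroid_bounds:
  assumes "\<gamma> > 0"
  shows "a < centroid \<gamma>" "centroid \<gamma> < b"
proof -
  have "0 < integral {a..b} (\<lambda>t. (t - a) * h t powr \<gamma>)"
    by (rule integral_weighted_powr_pos[of \<gamma> a b _ "(b - a) / 3"])
       (use assms less in \<open>auto intro!: continuous_intros\<close>)
  thus "a < centroid \<gamma>"
    using integral_centered_moment[OF assms, of a] mass_pos[OF assms] by (simp add: zero_less_mult_iff)
  have "0 < integral {a..b} (\<lambda>t. (b - t) * h t powr \<gamma>)"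
    by (rule integral_weighted_powr_pos[of \<gamma> a b _ "(b - a) / 3"])
       (use assms less in \<open>auto intro!: continuous_intros\<close>)
  also have "(\<lambda>t. (b - t) * h t powr \<gamma>) = (\<lambda>t. - ((t - b) * h t powr \<gamma>))"
    by (simp add: fun_eq_iff algebra_simps)
  finally show "centroid \<gamma> < b"
    using integral_centered_moment[OF assms, of b] mass_pos[OF assms]
    by (simp add: integral_neg mult_less_0_iff)
qed

lemma centroid_balance:
  assumes "\<gamma> > 0"
  shows "integral {a..centroid \<gamma>} (\<lambda>t. (centroid \<gamma> - t) * h t powr \<gamma>)
       = integral {centroid \<gamma>..b} (\<lambda>t. (t - centroid \<gamma>) * h t powr \<gamma>)"
proof -
  let ?m = "centroid \<gamma>"
  let ?f = "\<lambda>t. (t - ?m) * h t powr \<gamma>"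
  have "integral {a..?m} ?f + integral {?m..b} ?f = integral {a..b} ?f"
    using centroid_bounds[OF assms] assms
    by (intro Henstock_Kurzweil_Integration.integral_combine integrable_weighted_powr)
       (auto intro!: continuous_intros)
  also have "\<dots> = 0" by (simp add: integral_centered_moment[OF assms])
  moreover have "(\<lambda>t. (?m - t) * h t powr \<gamma>) = (\<lambda>t. - ?f t)"
    by (simp add: fun_eq_iff algebra_simps)
  ultimately show ?thesis
    by (simp only: integral_neg)
qed

lemma mass_le_of_head_moment_le:
  assumes \<gamma>: "\<gamma> > 0" and m: "a < m" "m < b"
    and moment: "integral {a..m} (\<lambda>t. (m - t) * h t powr \<gamma>)
                   \<le> tail_mass \<gamma> m * cone_width \<gamma> m / (\<gamma> + 2)"
  shows "mass \<gamma> \<le> ((\<gamma> + 2) / (\<gamma> + 1)) powr (\<gamma> + 1) * tail_mass \<gamma> m"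
proof -
  let ?G = "cone_width \<gamma> m" and ?K = "cone_height \<gamma> m" and ?\<Phi> = "tail_mass \<gamma> m"
  define r where "r = (\<gamma> + 2) / (\<gamma> + 1)"
  define c where "c = apex \<gamma> m - r * ?G"
  have I0: "((\<lambda>t. ?K t powr \<gamma>) has_integral ?\<Phi> * (r powr (\<gamma> + 1) - 1)) {c..m}"
    and I1: "((\<lambda>t. (m - t) * ?K t powr \<gamma>) has_integral ?\<Phi> * ?G / (\<gamma> + 2)) {c..m}"
    unfolding r_def c_def using truncated_cone_integrals[OF \<gamma> m] by auto
  have "r > 1" using \<gamma> by (simp add: r_def)
  hence cm: "c < m" using cone_width_pos[OF \<gamma> m] by (simp add: c_def apex_def algebra_simps)
  have Kh: "h t powr \<gamma> \<le> ?K t powr \<gamma>" if "t \<in> {a..m}" for t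
    using le_cone_on_left[OF \<gamma> m that] nonneg[of t] that m \<gamma> by (intro powr_mono2) auto
  have "head_mass \<gamma> m \<le> ?\<Phi> * (r powr (\<gamma> + 1) - 1)"
  proof (cases "c < a")
    case True
    have K_int: "(\<lambda>t. ?K t powr \<gamma>) integrable_on {c..m}" using I0 by blast
    have "head_mass \<gamma> m \<le> integral {a..m} (\<lambda>t. ?K t powr \<gamma>)"
      unfolding head_mass_def using Kh integrable_powr[of \<gamma> a m] K_int True m \<gamma>
      by (intro integral_le integrable_on_subinterval[OF K_int]) auto
    also have "\<dots> \<le> integral {c..m} (\<lambda>t. ?K t powr \<gamma>)"
      using K_int True m cone_nonneg[OF \<gamma> m] x_less_apex[OF \<gamma> m]
      by (intro integral_subset_le integrable_on_subinterval[OF K_int]) auto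
    finally show ?thesis using integral_unique[OF I0] by simp
  next
    case False
    have "(m - c) * (head_mass \<gamma> m - ?\<Phi> * (r powr (\<gamma> + 1) - 1))
        \<le> integral {a..m} (\<lambda>t. (m - t) * h t powr \<gamma>) - ?\<Phi> * ?G / (\<gamma> + 2)"
    proof (rule bathtub_le[OF _ _ _ _ I0 I1])
      show "((\<lambda>t. h t powr \<gamma>) has_integral head_mass \<gamma> m) {a..m}"
        unfolding head_mass_def using integrable_powr[of \<gamma> a m] m \<gamma> by auto
      show "((\<lambda>t. (m - t) * h t powr \<gamma>) has_integral integral {a..m} (\<lambda>t. (m - t) * h t powr \<gamma>)) {a..m}"
        using m \<gamma> by (intro integrable_integral integrable_weighted_powr) (auto intro!: continuous_intros)
    qed (use False cm Kh m nonneg in auto)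
    also have "\<dots> \<le> 0" using moment by simp
    finally show ?thesis using cm by (simp add: mult_le_0_iff)
  qed
  thus ?thesis
    using head_mass_add_tail_mass[of \<gamma> m] m \<gamma> by (simp add: r_def algebra_simps)
qed

lemma tail_mass_at_centroid_ge:
  assumes "\<gamma> > 0"
  shows "((\<gamma> + 1) / (\<gamma> + 2)) powr (\<gamma> + 1) * mass \<gamma> \<le> tail_mass \<gamma> (centroid \<gamma>)"
proof -
  let ?m = "centroid \<gamma>"
  have m: "a < ?m" "?m < b" using centroid_bounds[OF assms] .
  have "mass \<gamma> \<le> ((\<gamma> + 2) / (\<gamma> + 1)) powr (\<gamma> + 1) * tail_mass \<gamma> ?m"
    using mass_le_of_head_moment_le[OF assms m] centroid_balance[OF assms] tail_moment_le[OF assms m]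
    by simp
  hence "((\<gamma> + 1) / (\<gamma> + 2)) powr (\<gamma> + 1) * mass \<gamma>
      \<le> ((\<gamma> + 1) / (\<gamma> + 2)) powr (\<gamma> + 1) * ((\<gamma> + 2) / (\<gamma> + 1)) powr (\<gamma> + 1) * tail_mass \<gamma> ?m"
    by (simp add: mult.assoc mult_left_mono)
  also have "((\<gamma> + 1) / (\<gamma> + 2)) powr (\<gamma> + 1) * ((\<gamma> + 2) / (\<gamma> + 1)) powr (\<gamma> + 1) = 1"
    using assms by (simp add: powr_mult[symmetric])
  finally show ?thesis by simp
qed

lemma hazard_antimono:
  assumes \<alpha>: "0 < \<alpha>" "\<alpha> \<le> \<beta>" and z: "a < z" "z < b"
  shows "h z powr \<beta> / ((\<beta> + 1) * tail_mass \<beta> z) \<le> h z powr \<alpha> / ((\<alpha> + 1) * tail_mass \<alpha> z)"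
proof -
  have \<beta>: "\<beta> > 0" using \<alpha> by simp
  have P: "tail_mass \<alpha> z > 0" "tail_mass \<beta> z > 0" using tail_mass_pos \<alpha> \<beta> z by auto
  have hz: "h z powr \<alpha> > 0" using pos_interior[OF z] by simp
  have "h z powr \<beta> * ((\<alpha> + 1) * tail_mass \<alpha> z / h z powr \<alpha>) / (\<beta> + 1) \<le> tail_mass \<beta> z"
    using tail_mass_ge_cone[OF \<alpha>(1) z \<alpha>(2)] by (simp add: cone_width_def)
  hence "h z powr \<beta> * ((\<alpha> + 1) * tail_mass \<alpha> z) / h z powr \<alpha> \<le> tail_mass \<beta> z * (\<beta> + 1)"
    by (subst (asm) pos_divide_le_eq) (use \<beta> in auto)
  hence "h z powr \<beta> * ((\<alpha> + 1) * tail_mass \<alpha> z) \<le> tail_mass \<beta> z * (\<beta> + 1) * h z powr \<alpha>"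
    by (subst (asm) pos_divide_le_eq) (use hz in auto)
  hence "h z powr \<beta> * ((\<alpha> + 1) * tail_mass \<alpha> z) \<le> h z powr \<alpha> * ((\<beta> + 1) * tail_mass \<beta> z)"
    by (simp add: ac_simps)
  thus ?thesis
    using P \<alpha> \<beta> by (simp add: divide_simps mult.commute mult.left_commute)
qed

lemma tail_mass_ratio_powr_le:
  assumes \<alpha>: "0 < \<alpha>" "\<alpha> \<le> \<beta>" and x: "a < x" "x < b"
  shows "(tail_mass \<alpha> x / mass \<alpha>) powr ((\<beta> + 1) / (\<alpha> + 1)) \<le> tail_mass \<beta> x / mass \<beta>"
proof -
  have \<beta>: "\<beta> > 0" using \<alpha> by simp
  have pos: "tail_mass \<gamma> y > 0" if "\<gamma> > 0" "y \<in> {a..x}" for \<gamma> y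
    using tail_mass_pos[of \<gamma> y] that x by auto
  define L where "L y = ln (tail_mass \<beta> y) / (\<beta> + 1) - ln (tail_mass \<alpha> y) / (\<alpha> + 1)" for y
  have "L a \<le> L x"
  proof (rule DERIV_nonneg_imp_increasing_open[of a x L])
    show "a \<le> x" using x by simp
    have "\<forall>y\<in>{a..x}. tail_mass \<alpha> y > 0" "\<forall>y\<in>{a..x}. tail_mass \<beta> y > 0"
      using pos \<alpha> \<beta> by auto
    thus "continuous_on {a..x} L"
      unfolding L_def using \<alpha> \<beta> x
      by (intro continuous_intros continuous_on_subset[OF continuous_on_tail_mass]) auto
    fix z assume z: "a < z" "z < x"
    have zab: "z \<in> {a<..<b}" using z x by auto
    have P: "tail_mass \<alpha> z > 0" "tail_mass \<beta> z > 0" using pos z \<alpha> \<beta> by auto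
    have dln: "((\<lambda>y. ln (tail_mass \<gamma> y)) has_real_derivative 1 / tail_mass \<gamma> z * - (h z powr \<gamma>)) (at z)"
      if "\<gamma> > 0" "tail_mass \<gamma> z > 0" for \<gamma>
      by (rule DERIV_chain2[OF DERIV_ln_divide[OF that(2)] has_real_derivative_tail_mass[OF zab]])
         (use that in simp)
    have d: "(L has_real_derivative
        (1 / tail_mass \<beta> z * - (h z powr \<beta>)) / (\<beta> + 1) - (1 / tail_mass \<alpha> z * - (h z powr \<alpha>)) / (\<alpha> + 1)) (at z)"
      unfolding L_def by (intro DERIV_diff DERIV_cdivide dln \<alpha> \<beta> P)
    have "h z powr \<beta> / ((\<beta> + 1) * tail_mass \<beta> z) \<le> h z powr \<alpha> / ((\<alpha> + 1) * tail_mass \<alpha> z)"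
      using hazard_antimono[OF \<alpha>] zab by simp
    hence "0 \<le> (1 / tail_mass \<beta> z * - (h z powr \<beta>)) / (\<beta> + 1) - (1 / tail_mass \<alpha> z * - (h z powr \<alpha>)) / (\<alpha> + 1)"
      by (simp add: field_simps)
    thus "\<exists>y. (L has_real_derivative y) (at z) \<and> 0 \<le> y" using d by blast
  qed
  hence "ln (tail_mass \<alpha> x / mass \<alpha>) / (\<alpha> + 1) \<le> ln (tail_mass \<beta> x / mass \<beta>) / (\<beta> + 1)"
    using pos[of \<alpha> x] pos[of \<beta> x] mass_pos[of \<alpha>] mass_pos[of \<beta>] \<alpha> \<beta> x
    by (simp add: L_def ln_div diff_divide_distrib)
  hence "((\<beta> + 1) / (\<alpha> + 1)) * ln (tail_mass \<alpha> x / mass \<alpha>) \<le> ln (tail_mass \<beta> x / mass \<beta>)"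
    using \<alpha> \<beta> by (simp add: field_simps)
  hence "exp (((\<beta> + 1) / (\<alpha> + 1)) * ln (tail_mass \<alpha> x / mass \<alpha>)) \<le> exp (ln (tail_mass \<beta> x / mass \<beta>))"
    by simp
  thus ?thesis
    using pos[of \<alpha> x] pos[of \<beta> x] mass_pos[of \<alpha>] mass_pos[of \<beta>] \<alpha> \<beta> x
    by (simp add: powr_def)
qed

lemma tail_mass_div_powr_mono:
  assumes \<gamma>: "\<gamma> > 0" and yx: "a < y" "y \<le> x" "x < b"
  shows "tail_mass \<gamma> y / (b - y) powr (\<gamma> + 1) \<le> tail_mass \<gamma> x / (b - x) powr (\<gamma> + 1)"
proof -
  define N where "N t = ln (tail_mass \<gamma> t) - (\<gamma> + 1) * ln (b - t)" for t
  have pos: "tail_mass \<gamma> t > 0" if "t \<in> {y..x}" for t using tail_mass_pos[of \<gamma> t] that yx \<gamma> by auto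
  have "N y \<le> N x"
  proof (rule DERIV_nonneg_imp_increasing_open[of y x N])
    show "y \<le> x" using yx by simp
    have "\<forall>t\<in>{y..x}. tail_mass \<gamma> t > 0" using pos by auto
    thus "continuous_on {y..x} N"
      unfolding N_def using yx \<gamma>
      by (intro continuous_intros continuous_on_subset[OF continuous_on_tail_mass]) auto
    fix z assume z: "y < z" "z < x"
    have zab: "z \<in> {a<..<b}" using z yx by auto
    have P: "tail_mass \<gamma> z > 0" using pos z by auto
    have bz: "b - z > 0" using zab by auto
    have d1: "((\<lambda>t. ln (tail_mass \<gamma> t)) has_real_derivative 1 / tail_mass \<gamma> z * - (h z powr \<gamma>)) (at z)"
      by (rule DERIV_chain2[OF DERIV_ln_divide[OF P] has_real_derivative_tail_mass[OF zab]]) (use \<gamma> in simp)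
    have d2: "((\<lambda>t. ln (b - t)) has_real_derivative 1 / (b - z) * (0 - 1)) (at z)"
      using bz by (auto intro!: derivative_eq_intros)
    have d: "(N has_real_derivative 1 / tail_mass \<gamma> z * - (h z powr \<gamma>) - (\<gamma> + 1) * (1 / (b - z) * (0 - 1))) (at z)"
      unfolding N_def by (intro DERIV_diff DERIV_cmult d1 d2)
    have "b - z \<le> cone_width \<gamma> z" using b_le_apex[OF \<gamma>, of z] zab by (simp add: apex_def)
    hence "(b - z) * h z powr \<gamma> \<le> (\<gamma> + 1) * tail_mass \<gamma> z"
      using pos_interior[of z] zab by (simp add: cone_width_def field_simps)
    hence "h z powr \<gamma> / tail_mass \<gamma> z \<le> (\<gamma> + 1) / (b - z)"
      using P bz by (simp add: divide_simps mult.commute)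
    hence "0 \<le> 1 / tail_mass \<gamma> z * - (h z powr \<gamma>) - (\<gamma> + 1) * (1 / (b - z) * (0 - 1))"
      by simp
    thus "\<exists>v. (N has_real_derivative v) (at z) \<and> 0 \<le> v" using d by blast
  qed
  hence "exp (N y) \<le> exp (N x)" by simp
  moreover have "exp (N t) = tail_mass \<gamma> t / (b - t) powr (\<gamma> + 1)" if "t \<in> {y..x}" for t
    using pos[OF that] that yx by (simp add: N_def exp_diff powr_def)
  ultimately show ?thesis using yx by simp
qed

section \<open>Head masses by reflection\<close>

lemma reflect: "concave_profile (-b) (-a) (\<lambda>t. h (-t))"
proof
  show "-b < -a" using less by simp
  show "concave_on {-b..-a} (\<lambda>t. h (-t))"
    unfolding concave_on_iff
  proof (intro conjI ballI allI impI)
    show "convex {-b..-a::real}" by simp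
    fix x y u v :: real
    assume xy: "x \<in> {-b..-a}" "y \<in> {-b..-a}" and uv: "0 \<le> u" "0 \<le> v" "u + v = 1"
    have "u * h (-x) + v * h (-y) \<le> h (u *\<^sub>R (-x) + v *\<^sub>R (-y))"
      using concave xy uv unfolding concave_on_iff by (metis atLeastAtMost_iff minus_le_iff le_minus_iff)
    thus "u * h (- x) + v * h (- y) \<le> h (- (u *\<^sub>R x + v *\<^sub>R y))" by (simp add: algebra_simps)
  qed
  show "h (-t) \<ge> 0" if "t \<in> {-b..-a}" for t
    using nonneg that by (metis atLeastAtMost_iff minus_le_iff le_minus_iff)
  obtain t where "t \<in> {a..b}" "h t \<noteq> 0" using nonzero by blast
  thus "\<exists>t\<in>{-b..-a}. h (-t) \<noteq> 0" by (intro bexI[of _ "-t"]) auto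
qed

lemma reflect_tail_mass: "concave_profile.tail_mass (-a) (\<lambda>t. h (-t)) \<gamma> (-x) = head_mass \<gamma> x"
  unfolding concave_profile.tail_mass_def[OF reflect] head_mass_def
  using Henstock_Kurzweil_Integration.integral_reflect_real[of x a "\<lambda>s. h s powr \<gamma>"] by simp

lemma reflect_cone_width:
  "concave_profile.cone_width (-a) (\<lambda>t. h (-t)) \<gamma> (-x) = (\<gamma> + 1) * head_mass \<gamma> x / h x powr \<gamma>"
  unfolding concave_profile.cone_width_def[OF reflect] reflect_tail_mass by simp

definition head_moment :: "real \<Rightarrow> real \<Rightarrow> real" where
  "head_moment \<gamma> y = integral {a..y} (\<lambda>t. (y - t) * h t powr \<gamma>)"

lemma head_moment_le:
  assumes "\<gamma> > 0" "a < x" "x < b"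
  shows "(\<gamma> + 2) * head_moment \<gamma> x \<le> (\<gamma> + 1) * head_mass \<gamma> x ^ 2 / h x powr \<gamma>"
proof -
  interpret R: concave_profile "-b" "-a" "\<lambda>t. h (-t)" by (rule reflect)
  have "integral {-x..-a} (\<lambda>t. (t - - x) * h (-t) powr \<gamma>)
      \<le> R.tail_mass \<gamma> (-x) * R.cone_width \<gamma> (-x) / (\<gamma> + 2)"
    by (rule R.tail_moment_le) (use assms in auto)
  moreover have "integral {-x..-a} (\<lambda>t. (t - - x) * h (-t) powr \<gamma>) = head_moment \<gamma> x"
    using Henstock_Kurzweil_Integration.integral_reflect_real[of x a "\<lambda>s. (x - s) * h s powr \<gamma>"]
    by (simp add: head_moment_def algebra_simps)
  ultimately have "head_moment \<gamma> x \<le> head_mass \<gamma> x * ((\<gamma> + 1) * head_mass \<gamma> x / h x powr \<gamma>) / (\<gamma> + 2)"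
    unfolding reflect_tail_mass reflect_cone_width by simp
  hence "head_moment \<gamma> x * (\<gamma> + 2) \<le> head_mass \<gamma> x * ((\<gamma> + 1) * head_mass \<gamma> x / h x powr \<gamma>)"
    by (subst (asm) pos_le_divide_eq) (use assms in auto)
  thus ?thesis by (simp add: power2_eq_square ac_simps)
qed

lemma head_mass_ge_cone:
  assumes "0 < \<gamma>" "\<gamma> \<le> \<delta>" "a < x" "x < b"
  shows "h x powr \<delta> * ((\<gamma> + 1) * head_mass \<gamma> x / h x powr \<gamma>) / (\<delta> + 1) \<le> head_mass \<delta> x"
proof -
  interpret R: concave_profile "-b" "-a" "\<lambda>t. h (-t)" by (rule reflect)
  have "h (- (- x)) powr \<delta> * R.cone_width \<gamma> (-x) / (\<delta> + 1) \<le> R.tail_mass \<delta> (-x)"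
    by (rule R.tail_mass_ge_cone) (use assms in auto)
  thus ?thesis unfolding reflect_tail_mass reflect_cone_width by simp
qed

lemma head_moment_eq:
  assumes "\<gamma> \<ge> 0" "a \<le> y" "y \<le> b"
  shows "head_moment \<gamma> y = y * head_mass \<gamma> y - integral {a..y} (\<lambda>t. t * h t powr \<gamma>)"
proof -
  have "((\<lambda>t. y * h t powr \<gamma> - t * h t powr \<gamma>) has_integral
          y * head_mass \<gamma> y - integral {a..y} (\<lambda>t. t * h t powr \<gamma>)) {a..y}"
    unfolding head_mass_def using assms integrable_weighted_powr[of "\<lambda>t. t" \<gamma> a y]
    by (intro has_integral_diff has_integral_mult_right integrable_integral integrable_powr) auto
  thus ?thesis
    unfolding head_moment_def by (simp add: algebra_simps integral_unique)
qed

lemma has_real_derivative_head_moment: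
  assumes "z \<in> {a<..<b}" "\<gamma> \<ge> 0"
  shows "(head_moment \<gamma> has_real_derivative head_mass \<gamma> z) (at z)"
proof -
  have "((\<lambda>y. integral {a..y} (\<lambda>t. t * h t powr \<gamma>)) has_real_derivative z * h z powr \<gamma>) (at z)"
    using assms integrable_weighted_powr[of "\<lambda>t. t" \<gamma> a b]
    by (intro has_real_derivative_integral_interior continuous_on_mult continuous_on_id)
       (auto simp: continuous_on_powr_Ioo)
  hence "((\<lambda>y. y * head_mass \<gamma> y - integral {a..y} (\<lambda>t. t * h t powr \<gamma>)) has_real_derivative
      head_mass \<gamma> z) (at z)"
    using has_real_derivative_head_mass[OF assms]
    by (auto intro!: derivative_eq_intros simp: algebra_simps)
  thus ?thesis
    by (rule has_field_derivative_transform_within_open[where S="{a<..<b}"])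
       (use assms head_moment_eq in auto)
qed

lemma continuous_on_head_moment:
  assumes "\<gamma> \<ge> 0"
  shows "continuous_on {a..b} (head_moment \<gamma>)"
proof -
  have "continuous_on {a..b} (\<lambda>y. y * head_mass \<gamma> y - integral {a..y} (\<lambda>t. t * h t powr \<gamma>))"
    using assms integrable_weighted_powr[of "\<lambda>t. t" \<gamma> a b]
    by (intro continuous_intros continuous_on_head_mass indefinite_integral_continuous_1) auto
  thus ?thesis
    by (rule continuous_on_eq) (use assms head_moment_eq in auto)
qed

lemma head_moment_b: "\<gamma> > 0 \<Longrightarrow> head_moment \<gamma> b = (b - centroid \<gamma>) * mass \<gamma>"
  using head_moment_eq[of \<gamma> b] less mass_pos[of \<gamma>]
  by (simp add: g_alpha_def mass_def algebra_simps)

lemma head_moment_nonneg: "\<gamma> \<ge> 0 \<Longrightarrow> a \<le> y \<Longrightarrow> y \<le> b \<Longrightarrow> 0 \<le> head_moment \<gamma> y"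
  unfolding head_moment_def
  by (intro integral_nonneg integrable_weighted_powr) (auto intro!: continuous_intros nonneg)

lemma head_moment_le_head_mass:
  assumes "\<gamma> \<ge> 0" "a \<le> y" "y \<le> b"
  shows "head_moment \<gamma> y \<le> (y - a) * head_mass \<gamma> y"
proof -
  have "head_moment \<gamma> y \<le> integral {a..y} (\<lambda>t. (y - a) * h t powr \<gamma>)"
    unfolding head_moment_def using assms
    by (intro integral_le integrable_weighted_powr) (auto intro!: continuous_intros mult_right_mono)
  thus ?thesis by (simp add: head_mass_def)
qed

lemma head_mass_le:
  assumes "\<gamma> \<ge> 0" "a \<le> y" "y \<le> b" "\<And>t. t \<in> {a..b} \<Longrightarrow> h t \<le> M"
  shows "head_mass \<gamma> y \<le> (y - a) * M powr \<gamma>"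
proof -
  have "head_mass \<gamma> y \<le> integral {a..y} (\<lambda>t. M powr \<gamma>)"
    unfolding head_mass_def using assms
    by (intro integral_le integrable_powr) (auto intro!: powr_mono2 nonneg)
  thus ?thesis using assms by simp
qed

section \<open>Comparing centroids\<close>

text \<open>At \<open>b\<close> the defect is \<open>mass \<alpha>\<close> times the difference compared in \<open>centroid_gap_mono\<close>;
  it tends to \<open>0\<close> at \<open>a\<close> and is nondecreasing.\<close>

definition moment_defect :: "real \<Rightarrow> real \<Rightarrow> real \<Rightarrow> real" where
  "moment_defect \<alpha> \<beta> y =
     (\<alpha> + 2) * head_moment \<alpha> y - (\<beta> + 2) * (head_moment \<beta> y * head_mass \<alpha> y / head_mass \<beta> y)"

lemma moment_defect_le_at_b:
  assumes \<beta>: "0 < \<beta>" "\<beta> \<le> \<alpha>" and y: "a < y" "y < b"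
  shows "moment_defect \<alpha> \<beta> y \<le> moment_defect \<alpha> \<beta> b"
proof (rule DERIV_nonneg_imp_increasing_open[of y b])
  have \<alpha>: "\<alpha> > 0" using \<beta> by simp
  show "y \<le> b" using y by simp
  have "\<forall>z\<in>{y..b}. head_mass \<beta> z \<noteq> 0"
  proof
    fix z assume "z \<in> {y..b}"
    thus "head_mass \<beta> z \<noteq> 0" using head_mass_pos[of \<beta> z] \<beta> y by auto
  qed
  thus "continuous_on {y..b} (moment_defect \<alpha> \<beta>)"
    unfolding moment_defect_def[abs_def] using \<alpha> \<beta> y
    by (intro continuous_intros continuous_on_subset[OF continuous_on_head_moment]
        continuous_on_subset[OF continuous_on_head_mass]) auto
  fix z assume z: "y < z" "z < b"
  have zab: "z \<in> {a<..<b}" using z y by auto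
  have P: "head_mass \<beta> z > 0" "head_mass \<alpha> z > 0" using head_mass_pos \<alpha> \<beta> zab by auto
  have H: "h z powr \<alpha> > 0" "h z powr \<beta> > 0" using pos_interior[of z] zab by auto
  have d: "(moment_defect \<alpha> \<beta> has_real_derivative (\<alpha> + 2) * head_mass \<alpha> z - (\<beta> + 2) *
      (((head_mass \<beta> z * head_mass \<alpha> z + h z powr \<alpha> * head_moment \<beta> z) * head_mass \<beta> z
        - head_moment \<beta> z * head_mass \<alpha> z * h z powr \<beta>) / (head_mass \<beta> z * head_mass \<beta> z))) (at z)"
    unfolding moment_defect_def[abs_def] using \<alpha> \<beta> P zab
    by (intro DERIV_diff DERIV_cmult DERIV_divide DERIV_mult has_real_derivative_head_moment
        has_real_derivative_head_mass) auto
  have "(\<beta> + 2) * head_moment \<beta> z \<le> (\<beta> + 1) * head_mass \<beta> z * head_mass \<beta> z / h z powr \<beta>"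
    using head_moment_le[OF \<beta>(1)] zab by (simp add: power2_eq_square mult.assoc)
  moreover have "(\<beta> + 1) * head_mass \<beta> z * h z powr \<alpha> / h z powr \<beta> \<le> (\<alpha> + 1) * head_mass \<alpha> z"
  proof -
    have "h z powr \<alpha> * ((\<beta> + 1) * head_mass \<beta> z / h z powr \<beta>) / (\<alpha> + 1) \<le> head_mass \<alpha> z"
      using head_mass_ge_cone[OF \<beta>, of z] zab by simp
    hence "h z powr \<alpha> * ((\<beta> + 1) * head_mass \<beta> z / h z powr \<beta>) \<le> head_mass \<alpha> z * (\<alpha> + 1)"
      by (subst (asm) pos_divide_le_eq) (use \<alpha> in auto)
    thus ?thesis by (simp add: ac_simps)
  qed
  ultimately have "0 \<le> (\<alpha> + 2) * head_mass \<alpha> z - (\<beta> + 2) *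
      (((head_mass \<beta> z * head_mass \<alpha> z + h z powr \<alpha> * head_moment \<beta> z) * head_mass \<beta> z
        - head_moment \<beta> z * head_mass \<alpha> z * h z powr \<beta>) / (head_mass \<beta> z * head_mass \<beta> z))"
    using P H head_moment_nonneg[of \<beta> z] zab \<beta>
    by (intro moment_defect_deriv_nonneg) auto
  thus "\<exists>v. (moment_defect \<alpha> \<beta> has_real_derivative v) (at z) \<and> 0 \<le> v" using d by blast
qed

lemma centroid_gap_mono:
  assumes \<beta>: "0 < \<beta>" "\<beta> \<le> \<alpha>"
  shows "(\<beta> + 2) * (b - centroid \<beta>) \<le> (\<alpha> + 2) * (b - centroid \<alpha>)"
proof -
  have \<alpha>: "\<alpha> > 0" using \<beta> by simp
  obtain M where M: "M \<ge> 0" "\<And>t. t \<in> {a..b} \<Longrightarrow> h t \<le> M"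
    using bounded_above by blast
  have lower: "- (\<beta> + 2) * ((y - a) * ((y - a) * M powr \<alpha>)) \<le> moment_defect \<alpha> \<beta> y"
    if y: "a < y" "y < b" for y
  proof -
    have P: "head_mass \<beta> y > 0" "head_mass \<alpha> y > 0" using head_mass_pos \<alpha> \<beta> y by auto
    have "head_moment \<beta> y * head_mass \<alpha> y / head_mass \<beta> y \<le> (y - a) * head_mass \<alpha> y"
      using head_moment_le_head_mass[of \<beta> y] mult_right_mono[of _ _ "head_mass \<alpha> y"] P \<beta> y
      by (simp add: pos_divide_le_eq)
    also have "\<dots> \<le> (y - a) * ((y - a) * M powr \<alpha>)"
      using head_mass_le[of \<alpha> y M] M \<alpha> y by (intro mult_left_mono) auto
    finally have "(\<beta> + 2) * (head_moment \<beta> y * head_mass \<alpha> y / head_mass \<beta> y)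
        \<le> (\<beta> + 2) * ((y - a) * ((y - a) * M powr \<alpha>))"
      using \<beta> by (intro mult_left_mono) auto
    moreover have "0 \<le> (\<alpha> + 2) * head_moment \<alpha> y"
      using head_moment_nonneg[of \<alpha> y] \<alpha> y by simp
    ultimately show ?thesis unfolding moment_defect_def by linarith
  qed
  have "0 \<le> moment_defect \<alpha> \<beta> b"
  proof (rule tendsto_upperbound)
    have "((\<lambda>y. - (\<beta> + 2) * ((y - a) * ((y - a) * M powr \<alpha>))) \<longlongrightarrow>
        - (\<beta> + 2) * ((a - a) * ((a - a) * M powr \<alpha>))) (at_right a)"
      by (intro tendsto_intros)
    thus "((\<lambda>y. - (\<beta> + 2) * ((y - a) * ((y - a) * M powr \<alpha>))) \<longlongrightarrow> 0) (at_right a)" by simp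
    show "\<forall>\<^sub>F y in at_right a. - (\<beta> + 2) * ((y - a) * ((y - a) * M powr \<alpha>)) \<le> moment_defect \<alpha> \<beta> b"
      using eventually_at_right_real[OF less]
      by eventually_elim (use moment_defect_le_at_b[OF \<beta>] lower in \<open>auto intro: order_trans\<close>)
  qed simp
  also have "moment_defect \<alpha> \<beta> b = mass \<alpha> * ((\<alpha> + 2) * (b - centroid \<alpha>) - (\<beta> + 2) * (b - centroid \<beta>))"
    unfolding moment_defect_def head_moment_b[OF \<alpha>] head_moment_b[OF \<beta>(1)] head_mass_b
    using mass_pos[OF \<beta>(1)] by (simp add: field_simps)
  finally show ?thesis using mass_pos[OF \<alpha>] by (simp add: zero_le_mult_iff)
qed

lemma tail_mass_at_centroid_ge_of_le:
  assumes \<beta>: "0 < \<beta>" "\<beta> \<le> \<alpha>"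
  shows "((\<beta> + 1) / (\<alpha> + 2)) powr (\<beta> + 1) \<le> tail_mass \<beta> (centroid \<alpha>) / mass \<beta>"
proof -
  have \<alpha>: "\<alpha> > 0" using \<beta> by simp
  define c where "c = centroid \<alpha>"
  define d where "d = centroid \<beta>"
  have c: "a < c" "c < b" using centroid_bounds[OF \<alpha>] by (auto simp: c_def)
  have d: "a < d" "d < b" using centroid_bounds[OF \<beta>(1)] by (auto simp: d_def)
  have M: "mass \<beta> > 0" using mass_pos \<beta> by simp
  have grunbaum: "((\<beta> + 1) / (\<beta> + 2)) powr (\<beta> + 1) * mass \<beta> \<le> tail_mass \<beta> d"
    using tail_mass_at_centroid_ge[OF \<beta>(1)] by (simp add: d_def)
  have "((\<beta> + 1) / (\<alpha> + 2)) powr (\<beta> + 1) * mass \<beta> \<le> tail_mass \<beta> c"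
  proof (cases "c \<le> d")
    case True
    have "((\<beta> + 1) / (\<alpha> + 2)) powr (\<beta> + 1) * mass \<beta> \<le> ((\<beta> + 1) / (\<beta> + 2)) powr (\<beta> + 1) * mass \<beta>"
      using \<beta> M by (intro mult_right_mono powr_mono2 divide_left_mono) auto
    also have "\<dots> \<le> tail_mass \<beta> d" by (rule grunbaum)
    also have "\<dots> \<le> tail_mass \<beta> c" using True c d \<beta> by (intro tail_mass_antimono) auto
    finally show ?thesis .
  next
    case False
    have bc: "b - c > 0" "b - d > 0" using c d by auto
    have "(\<beta> + 2) / (\<alpha> + 2) \<le> (b - c) / (b - d)"
      using centroid_gap_mono[OF \<beta>] bc \<alpha> \<beta> by (simp add: c_def d_def field_simps)
    hence "((\<beta> + 2) / (\<alpha> + 2)) powr (\<beta> + 1) \<le> ((b - c) / (b - d)) powr (\<beta> + 1)"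
      using \<alpha> \<beta> by (intro powr_mono2) auto
    moreover have "((\<beta> + 1) / (\<alpha> + 2)) powr (\<beta> + 1)
        = ((\<beta> + 2) / (\<alpha> + 2)) powr (\<beta> + 1) * ((\<beta> + 1) / (\<beta> + 2)) powr (\<beta> + 1)"
      using \<beta> by (simp add: powr_mult[symmetric])
    ultimately have "((\<beta> + 1) / (\<alpha> + 2)) powr (\<beta> + 1) * mass \<beta>
        \<le> ((b - c) / (b - d)) powr (\<beta> + 1) * (((\<beta> + 1) / (\<beta> + 2)) powr (\<beta> + 1) * mass \<beta>)"
      using M by (simp add: mult.assoc mult_right_mono)
    also have "\<dots> \<le> ((b - c) / (b - d)) powr (\<beta> + 1) * tail_mass \<beta> d"
      using grunbaum by (intro mult_left_mono) auto
    also have "\<dots> = (b - c) powr (\<beta> + 1) * (tail_mass \<beta> d / (b - d) powr (\<beta> + 1))"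
      using bc by (simp add: powr_divide)
    also have "\<dots> \<le> (b - c) powr (\<beta> + 1) * (tail_mass \<beta> c / (b - c) powr (\<beta> + 1))"
      using False c d \<beta> by (intro mult_left_mono tail_mass_div_powr_mono) auto
    also have "\<dots> = tail_mass \<beta> c" using bc by simp
    finally show ?thesis .
  qed
  thus ?thesis using M by (simp add: c_def pos_le_divide_eq)
qed

lemma tail_mass_at_centroid_ge_of_ge:
  assumes \<alpha>: "0 < \<alpha>" "\<alpha> \<le> \<beta>"
  shows "((\<alpha> + 1) / (\<alpha> + 2)) powr (\<beta> + 1) \<le> tail_mass \<beta> (centroid \<alpha>) / mass \<beta>"
proof -
  have c: "a < centroid \<alpha>" "centroid \<alpha> < b" using centroid_bounds[OF \<alpha>(1)] .
  have "((\<alpha> + 1) / (\<alpha> + 2)) powr (\<alpha> + 1) \<le> tail_mass \<alpha> (centroid \<alpha>) / mass \<alpha>"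
    using tail_mass_at_centroid_ge[OF \<alpha>(1)] mass_pos[OF \<alpha>(1)] by (simp add: pos_le_divide_eq)
  hence "(((\<alpha> + 1) / (\<alpha> + 2)) powr (\<alpha> + 1)) powr ((\<beta> + 1) / (\<alpha> + 1))
      \<le> (tail_mass \<alpha> (centroid \<alpha>) / mass \<alpha>) powr ((\<beta> + 1) / (\<alpha> + 1))"
    using \<alpha> by (intro powr_mono2) auto
  also have "\<dots> \<le> tail_mass \<beta> (centroid \<alpha>) / mass \<beta>"
    by (rule tail_mass_ratio_powr_le[OF \<alpha> c])
  finally show ?thesis using \<alpha> by (simp add: powr_powr)
qed

end

theorem theorem1p2:
  fixes a b \<alpha> \<beta> :: real and h :: "real \<Rightarrow> real"
  assumes "a < b"
    and "concave_on {a..b} h"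
    and "\<And>t. t \<in> {a..b} \<Longrightarrow> h t \<ge> 0"
    and "\<exists>t\<in>{a..b}. h t \<noteq> 0"
    and "\<alpha> > 0" and "\<beta> > 0"
  shows "(\<beta> \<le> \<alpha> \<longrightarrow>
           integral {g_alpha \<alpha> a b h..b} (\<lambda>t. h t powr \<beta>) / integral {a..b} (\<lambda>t. h t powr \<beta>)
             \<ge> ((\<beta> + 1) / (\<alpha> + 2)) powr (\<beta> + 1))
       \<and> (\<alpha> \<le> \<beta> \<longrightarrow>
           integral {g_alpha \<alpha> a b h..b} (\<lambda>t. h t powr \<beta>) / integral {a..b} (\<lambda>t. h t powr \<beta>)
             \<ge> ((\<alpha> + 1) / (\<alpha> + 2)) powr (\<beta> + 1))"
proof -
  interpret concave_profile a b h
    by (rule concave_profile.intro) (use assms in auto)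
  show ?thesis
    using tail_mass_at_centroid_ge_of_le[of \<beta> \<alpha>] tail_mass_at_centroid_ge_of_ge[of \<alpha> \<beta>] assms(5,6)
    unfolding tail_mass_def mass_def by auto
qed

end
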